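(* Let $(a_n)_{n\ge 0}$ be Stern's sequence, defined by $a_0=0$, $a_1=1$, $a_{2n}=a_n$, $a_{2n+1}=a_n+a_{n+1}$ for $n\ge 1$, and let $(b_n)_{n\ge0}$ be its twisted version, defined by $b_0=0$, $b_1=1$, $b_{2n}=-b_n$, $b_{2n+1}=-(b_n+b_{n+1})$ for $n\ge 1$. Put $A(z)=\sum_{n\ge0}a_{n+1}z^n$ and $B(z)=\sum_{n\ge0}b_{n+1}z^n$. Then for every integer $b\ge 2$, \[\mu\left(A\left(\tfrac1b\right),B\left(\tfrac1b\right)\right)\le \tfrac85 .\] Moreover, if $a/b\in\mathbb{Q}$ with $a,b$ integers, $b\ge 2$, $\log|a|=\lambda\log b$ and $0\le\lambda<50/77$, then \[\mu\left(A\left(\tfrac ab\right),B\left(\tfrac ab\right)\right)\le \frac{80(1-\lambda)}{50-77\lambda}.\]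
   Context: For real numbers $\alpha_1,\dots,\alpha_n$, the simultaneous approximation exponent $\mu(\alpha_1,\dots,\alpha_n)$ is the supremum of the real numbers $\mu$ such that the inequality $\max_{1\le i\le n}|\alpha_i-p_i/q|<q^{-\mu}$ has infinitely many solutions in rational numbers $p_i/q$ (with common denominator $q\ge1$). The power series $A(z)$ and $B(z)$ converge in the open unit disc. *)

theory Defs
  imports Complex_Main "HOL-Library.Extended_Real"
begin

function stern :: "nat \<Rightarrow> int" where
  "stern n = (if n = 0 then 0 else if n = 1 then 1
              else if even n then stern (n div 2)
              else stern (n div 2) + stern (n div 2 + 1))"
  by auto
termination by (relation "measure id") (auto elim!: oddE)

function twisted_stern :: "nat \<Rightarrow> int" where
  "twisted_stern n = (if n = 0 then 0 else if n = 1 then 1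
              else if even n then - twisted_stern (n div 2)
              else - (twisted_stern (n div 2) + twisted_stern (n div 2 + 1)))"
  by auto
termination by (relation "measure id") (auto elim!: oddE)

definition stern_A :: "real \<Rightarrow> real" where
  "stern_A z = (\<Sum>n. real_of_int (stern (n + 1)) * z ^ n)"

definition stern_B :: "real \<Rightarrow> real" where
  "stern_B z = (\<Sum>n. real_of_int (twisted_stern (n + 1)) * z ^ n)"

definition sim_approx_exponent :: "real list \<Rightarrow> ereal" where
  "sim_approx_exponent \<alpha>s = Sup {ereal \<mu> | \<mu>.
      infinite {(q::int, ps::int list). q \<ge> 1 \<and> length ps = length \<alpha>s \<and>
        (\<forall>i < length \<alpha>s. \<bar>\<alpha>s ! i - real_of_int (ps ! i) / real_of_int q\<bar>
                            < real_of_int q powr (- \<mu>))}}"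

end

theory Submission
  imports Defs
begin

(* The generating functions satisfy the Mahler equations A(z) = (1 + z + z^2) A(z^2) and
   B(z) = 2 - (1 + z + z^2) B(z^2). Iterating them k times expresses A(z) and B(z) linearly through
   A(w) and B(w), w = z^(2^k), with coefficients in Z[z]. Take integer polynomials P, Q, R of degree
   about D for which P + Q A + R B vanishes to order N = 3D - 3 at 0 (explicit certificates, verified
   by evaluation). At z = a/b this yields linear forms in 1, A(z), B(z) of size about
   |z|^(2^k N) whose coefficients have denominator b^(2^k D). If p1/q and p2/q approximate A(z) and
   B(z) too well, such a form evaluated at (q, p1, p2) is an integer divided by b^(2^k D) of absolute
   value below b^(-2^k D), hence 0; three such forms are independent for large k, forcing q = 0.
   Choosing k and a degree among D = 25, 27, 29, 32, 35, 39, 44 (followed by 2 * 25 on the next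
   level) according to the size of q covers all large q, provided each consecutive pair of degrees
   satisfies a quadratic condition in lambda, which is what produces the exponent
   80(1 - lambda)/(50 - 77 lambda); the value 8/5 is the case a = 1, lambda = 0. *)

section \<open>Stern's sequences and their Mahler equations\<close>

declare stern.simps[simp del] twisted_stern.simps[simp del]

lemma stern_0 [simp]: "stern 0 = 0"
  by (subst stern.simps) simp

lemma stern_1 [simp]: "stern 1 = 1" and stern_Suc_0 [simp]: "stern (Suc 0) = 1"
  by (subst stern.simps; simp)+

lemma twisted_stern_0 [simp]: "twisted_stern 0 = 0"
  by (subst twisted_stern.simps) simp

lemma twisted_stern_1 [simp]: "twisted_stern 1 = 1"
  and twisted_stern_Suc_0 [simp]: "twisted_stern (Suc 0) = 1"
  by (subst twisted_stern.simps; simp)+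

lemma stern_even: "n \<ge> 1 \<Longrightarrow> stern (2 * n) = stern n"
  by (subst stern.simps) auto

lemma stern_odd: "stern (2 * n + 1) = stern n + stern (n + 1)"
  by (cases "n = 0") (simp, subst stern.simps, auto)

lemma twisted_stern_even: "n \<ge> 1 \<Longrightarrow> twisted_stern (2 * n) = - twisted_stern n"
  by (subst twisted_stern.simps) auto

lemma twisted_stern_odd:
  "n \<ge> 1 \<Longrightarrow> twisted_stern (2 * n + 1) = - (twisted_stern n + twisted_stern (n + 1))"
  by (subst twisted_stern.simps) auto

lemma stern_bounds: "0 \<le> stern n \<and> stern n \<le> int n \<and> \<bar>twisted_stern n\<bar> \<le> stern n"
proof (induction n rule: less_induct)
  case (less n)
  consider "n \<le> 1" | m where "n = 2 * m" "m \<ge> 1" | m where "n = 2 * m + 1" "m \<ge> 1"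
  proof (cases "n \<le> 1")
    case False
    then show ?thesis using that(2,3) by (cases "even n") (auto elim!: evenE oddE)
  qed (rule that(1))
  then show ?case
  proof cases
    case 1
    then have "n = 0 \<or> n = 1" by auto
    then show ?thesis by auto
  next
    case (2 m)
    then show ?thesis using less[of m] stern_even[of m] twisted_stern_even[of m] by auto
  next
    case (3 m)
    then show ?thesis
      using less[of m] less[of "m + 1"] stern_odd[of m] twisted_stern_odd[of m] by auto
  qed
qed

lemma stern_nonneg: "0 \<le> stern n"
  using stern_bounds by blast

lemma stern_le: "stern n \<le> int n"
  using stern_bounds by blast

lemma twisted_stern_abs_le: "\<bar>twisted_stern n\<bar> \<le> int n"
  using stern_bounds[of n] by linarith

lemma abs_stern_le: "\<bar>stern n\<bar> \<le> int n"
  using stern_nonneg[of n] stern_le[of n] by simp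

lemma summable_int_series_linear_coeffs:
  fixes z :: real and f :: "nat \<Rightarrow> int"
  assumes z: "\<bar>z\<bar> < 1" and f: "\<And>n. \<bar>f n\<bar> \<le> int (Suc n)"
  shows "summable (\<lambda>n. real_of_int (f n) * z ^ n)"
proof (rule summable_comparison_test')
  show "summable (\<lambda>n. real (Suc n) * \<bar>z\<bar> ^ n)"
    using geometric_deriv_sums[of "\<bar>z\<bar>"] z by (auto simp: sums_iff)
  fix n :: nat
  have "\<bar>real_of_int (f n)\<bar> \<le> real (Suc n)"
    using f[of n] by (metis of_int_abs of_int_le_iff of_int_of_nat_eq)
  then show "norm (real_of_int (f n) * z ^ n) \<le> real (Suc n) * \<bar>z\<bar> ^ n"
    by (simp add: abs_mult power_abs mult_right_mono)
qed

lemma stern_A_sums: "\<bar>z\<bar> < 1 \<Longrightarrow> (\<lambda>n. real_of_int (stern (n + 1)) * z ^ n) sums stern_A z"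
  unfolding stern_A_def using abs_stern_le[of "Suc _"]
  by (intro summable_sums summable_int_series_linear_coeffs) simp_all

lemma stern_B_sums: "\<bar>z\<bar> < 1 \<Longrightarrow> (\<lambda>n. real_of_int (twisted_stern (n + 1)) * z ^ n) sums stern_B z"
  unfolding stern_B_def using twisted_stern_abs_le[of "Suc _"]
  by (intro summable_sums summable_int_series_linear_coeffs) simp_all

lemma stern_A_partial_sums:
  fixes z :: real
  shows "(1 + z + z^2) * (\<Sum>m<N. real_of_int (stern (m + 1)) * (z^2) ^ m)
       = (\<Sum>n<2 * N. real_of_int (stern (n + 1)) * z ^ n) + real_of_int (stern N) * z ^ (2 * N)"
proof (induction N)
  case (Suc N)
  have "stern (2 * N + 2) = stern (N + 1)"
    using stern_even[of "N + 1"] by (simp add: algebra_simps)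
  with Suc stern_odd[of N] show ?case
    by (simp add: power_mult power_add power2_eq_square algebra_simps numeral_2_eq_2)
qed simp

lemma twisted_stern_partial_sums:
  fixes z :: real
  assumes "N \<ge> 1"
  shows "(1 + z + z^2) * (\<Sum>m<N. real_of_int (twisted_stern (m + 1)) * (z^2) ^ m)
       = 2 - (\<Sum>n<2 * N. real_of_int (twisted_stern (n + 1)) * z ^ n)
         + real_of_int (twisted_stern N) * z ^ (2 * N)"
  using assms
proof (induction N rule: nat_induct_at_least)
  case base
  have "twisted_stern 2 = -1" using twisted_stern_even[of 1] by simp
  then show ?case by (simp add: numeral_2_eq_2 algebra_simps power2_eq_square)
next
  case (Suc N)
  let ?S = "\<lambda>M. \<Sum>n<M. real_of_int (twisted_stern (n + 1)) * z ^ n"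
  have odd: "twisted_stern (2 * N + 1) = - (twisted_stern N + twisted_stern (N + 1))"
    using twisted_stern_odd[OF Suc.hyps] .
  have even: "twisted_stern (2 * N + 2) = - twisted_stern (N + 1)"
    using twisted_stern_even[of "N + 1"] by (simp add: algebra_simps)
  have "(1 + z + z^2) * (\<Sum>m<Suc N. real_of_int (twisted_stern (m + 1)) * (z^2) ^ m)
      = 2 - ?S (2 * N) + real_of_int (twisted_stern N) * z ^ (2 * N)
        + (1 + z + z^2) * real_of_int (twisted_stern (N + 1)) * z ^ (2 * N)"
    using Suc.IH by (simp add: power_mult ring_distribs)
  also have "\<dots> = 2 - (?S (2 * N) + real_of_int (twisted_stern (2 * N + 1)) * z ^ (2 * N)
        + real_of_int (twisted_stern (2 * N + 2)) * z ^ (2 * N + 1))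
        + real_of_int (twisted_stern (Suc N)) * z ^ (2 * Suc N)"
    unfolding odd even by (simp add: algebra_simps power2_eq_square power_add)
  also have "\<dots> = 2 - ?S (2 * Suc N) + real_of_int (twisted_stern (Suc N)) * z ^ (2 * Suc N)"
    by (simp add: numeral_2_eq_2 add.commute)
  finally show ?case .
qed

lemma int_times_power_even_tendsto_0:
  fixes z :: real and f :: "nat \<Rightarrow> int"
  assumes z: "\<bar>z\<bar> < 1" and f: "\<And>n. \<bar>f n\<bar> \<le> int n"
  shows "(\<lambda>N. real_of_int (f N) * z ^ (2 * N)) \<longlonglongrightarrow> 0"
proof (rule tendsto_0_le[of "\<lambda>n. real n * \<bar>z^2\<bar> ^ n" _ _ 1])
  have "norm (z^2) < 1" using z by (simp add: abs_square_less_1)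
  then show "(\<lambda>n. real n * \<bar>z^2\<bar> ^ n) \<longlonglongrightarrow> 0"
    using powser_times_n_limit_0[of "z^2"] by (simp add: power2_eq_square abs_mult)
  show "\<forall>\<^sub>F N in sequentially. norm (real_of_int (f N) * z ^ (2 * N)) \<le> norm (real N * \<bar>z^2\<bar> ^ N) * 1"
  proof (intro always_eventually allI)
    fix N
    have "\<bar>real_of_int (f N)\<bar> \<le> real N"
      using f[of N] by (metis of_int_abs of_int_le_iff of_int_of_nat_eq)
    then show "norm (real_of_int (f N) * z ^ (2 * N)) \<le> norm (real N * \<bar>z^2\<bar> ^ N) * 1"
      by (simp add: abs_mult power_abs power_mult mult_right_mono)
  qed
qed

lemma sums_imp_even_partial_sums: "f sums s \<Longrightarrow> (\<lambda>N. \<Sum>n<2 * N. f n) \<longlonglongrightarrow> s"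
  unfolding sums_def
  by (rule filterlim_compose[of "\<lambda>N. \<Sum>n<N. f n"])
     (auto intro!: filterlim_subseq simp: strict_mono_def)

lemma stern_A_mahler:
  fixes z :: real assumes z: "\<bar>z\<bar> < 1"
  shows "stern_A z = (1 + z + z^2) * stern_A (z^2)"
proof -
  have z2: "\<bar>z^2\<bar> < 1" using z by (simp add: abs_square_less_1)
  have "(\<lambda>N. (1 + z + z^2) * (\<Sum>m<N. real_of_int (stern (m + 1)) * (z^2) ^ m))
          \<longlonglongrightarrow> (1 + z + z^2) * stern_A (z^2)"
    using stern_A_sums[OF z2] by (intro tendsto_mult tendsto_const) (simp add: sums_def)
  moreover have "(\<lambda>N. (\<Sum>n<2 * N. real_of_int (stern (n + 1)) * z ^ n) + real_of_int (stern N) * z ^ (2 * N))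
          \<longlonglongrightarrow> stern_A z + 0"
    by (intro tendsto_add sums_imp_even_partial_sums stern_A_sums z int_times_power_even_tendsto_0)
       (use abs_stern_le in auto)
  ultimately show ?thesis
    unfolding stern_A_partial_sums by (simp add: LIMSEQ_unique)
qed

lemma stern_B_mahler:
  fixes z :: real assumes z: "\<bar>z\<bar> < 1"
  shows "stern_B z = 2 - (1 + z + z^2) * stern_B (z^2)"
proof -
  have z2: "\<bar>z^2\<bar> < 1" using z by (simp add: abs_square_less_1)
  have "(\<lambda>N. (1 + z + z^2) * (\<Sum>m<N. real_of_int (twisted_stern (m + 1)) * (z^2) ^ m))
          \<longlonglongrightarrow> (1 + z + z^2) * stern_B (z^2)"
    using stern_B_sums[OF z2] by (intro tendsto_mult tendsto_const) (simp add: sums_def)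
  moreover have "\<forall>\<^sub>F N in sequentially.
      (1 + z + z^2) * (\<Sum>m<N. real_of_int (twisted_stern (m + 1)) * (z^2) ^ m)
    = 2 - (\<Sum>n<2 * N. real_of_int (twisted_stern (n + 1)) * z ^ n) + real_of_int (twisted_stern N) * z ^ (2 * N)"
    using eventually_ge_at_top[of 1] by eventually_elim (rule twisted_stern_partial_sums)
  ultimately have "(\<lambda>N. 2 - (\<Sum>n<2 * N. real_of_int (twisted_stern (n + 1)) * z ^ n)
                      + real_of_int (twisted_stern N) * z ^ (2 * N)) \<longlonglongrightarrow> (1 + z + z^2) * stern_B (z^2)"
    by (rule Lim_transform_eventually)
  moreover have "(\<lambda>N. 2 - (\<Sum>n<2 * N. real_of_int (twisted_stern (n + 1)) * z ^ n)
                      + real_of_int (twisted_stern N) * z ^ (2 * N)) \<longlonglongrightarrow> 2 - stern_B z + 0"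
    by (intro tendsto_add tendsto_diff tendsto_const sums_imp_even_partial_sums stern_B_sums z
        int_times_power_even_tendsto_0) (use twisted_stern_abs_le in auto)
  ultimately have "(1 + z + z^2) * stern_B (z^2) = 2 - stern_B z"
    using LIMSEQ_unique by fastforce
  then show ?thesis by simp
qed

definition mahler_factor :: "real \<Rightarrow> real" where
  "mahler_factor x = 1 + x + x^2"

definition mahler_prod :: "nat \<Rightarrow> real \<Rightarrow> real" where
  "mahler_prod k z = (\<Prod>j<k. mahler_factor (z ^ 2 ^ j))"

primrec mahler_sum :: "nat \<Rightarrow> real \<Rightarrow> real" where
  "mahler_sum 0 z = 0"
| "mahler_sum (Suc k) z = mahler_sum k z + 2 * (-1) ^ k * mahler_prod k z"

lemma mahler_prod_Suc: "mahler_prod (Suc k) z = mahler_prod k z * mahler_factor (z ^ 2 ^ k)"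
  by (simp add: mahler_prod_def)

lemma mahler_factor_pos: "mahler_factor x > 0"
proof -
  have "mahler_factor x = (x + 1/2)^2 + 3/4"
    by (simp add: mahler_factor_def power2_eq_square algebra_simps)
  moreover have "(x + 1/2)^2 \<ge> 0" by simp
  ultimately show ?thesis by linarith
qed

lemma mahler_prod_pos: "mahler_prod k z > 0"
  unfolding mahler_prod_def by (intro prod_pos) (simp add: mahler_factor_pos)

lemma mahler_prod_le: "\<bar>z\<bar> \<le> 1 \<Longrightarrow> \<bar>mahler_prod k z\<bar> \<le> 3 ^ k"
proof (induction k)
  case (Suc k)
  have "\<bar>z ^ 2 ^ k\<bar> \<le> 1" using Suc.prems by (simp add: power_abs power_le_one)
  then have "(z ^ 2 ^ k)^2 \<le> 1" by (simp add: abs_square_le_1)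
  then have "\<bar>mahler_factor (z ^ 2 ^ k)\<bar> \<le> 3"
    using mahler_factor_pos[of "z ^ 2 ^ k"] \<open>\<bar>z ^ 2 ^ k\<bar> \<le> 1\<close> unfolding mahler_factor_def by auto
  then have "\<bar>mahler_prod k z\<bar> * \<bar>mahler_factor (z ^ 2 ^ k)\<bar> \<le> 3 ^ k * 3"
    using Suc by (intro mult_mono) auto
  then show ?case by (simp only: mahler_prod_Suc abs_mult power_Suc mult.commute)
qed (simp add: mahler_prod_def)

lemma stern_AB_iterate:
  fixes z :: real assumes z: "\<bar>z\<bar> < 1"
  shows "stern_A z = mahler_prod k z * stern_A (z ^ 2 ^ k) \<and>
         stern_B z = mahler_sum k z + (-1) ^ k * mahler_prod k z * stern_B (z ^ 2 ^ k)"
proof (induction k)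
  case (Suc k)
  let ?w = "z ^ 2 ^ k"
  have w: "\<bar>?w\<bar> < 1" using z by (simp add: power_abs power_less_one_iff)
  have w2: "?w^2 = z ^ 2 ^ Suc k" by (simp add: power_mult[symmetric] mult.commute)
  have A: "stern_A ?w = mahler_factor ?w * stern_A (z ^ 2 ^ Suc k)"
    using stern_A_mahler[OF w] w2 by (simp add: mahler_factor_def)
  have B: "stern_B ?w = 2 - mahler_factor ?w * stern_B (z ^ 2 ^ Suc k)"
    using stern_B_mahler[OF w] w2 by (simp add: mahler_factor_def)
  have "stern_A z = mahler_prod k z * stern_A ?w"
    and "stern_B z = mahler_sum k z + (-1) ^ k * mahler_prod k z * stern_B ?w"
    using Suc.IH by auto
  then show ?case
    unfolding A B by (simp add: mahler_prod_Suc algebra_simps)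
qed (simp add: mahler_prod_def)

section \<open>Integrality and integer polynomials\<close>

definition scaled_int :: "int \<Rightarrow> nat \<Rightarrow> real \<Rightarrow> bool" where
  "scaled_int b M x \<longleftrightarrow> real_of_int b ^ M * x \<in> \<int>"

lemma scaled_int_of_int: "scaled_int b M (of_int n)"
  unfolding scaled_int_def by (intro Ints_mult Ints_power) auto

lemma scaled_int_divide: "b \<noteq> 0 \<Longrightarrow> scaled_int b 1 (of_int a / of_int b)"
  unfolding scaled_int_def by simp

lemma scaled_int_add: "scaled_int b M x \<Longrightarrow> scaled_int b M y \<Longrightarrow> scaled_int b M (x + y)"
  unfolding scaled_int_def distrib_left by (rule Ints_add)

lemma scaled_int_diff: "scaled_int b M x \<Longrightarrow> scaled_int b M y \<Longrightarrow> scaled_int b M (x - y)"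
  unfolding scaled_int_def right_diff_distrib by (rule Ints_diff)

lemma scaled_int_mult:
  assumes "scaled_int b M x" "scaled_int b M' y" shows "scaled_int b (M + M') (x * y)"
proof -
  have eq: "real_of_int b ^ (M + M') * (x * y) = (real_of_int b ^ M * x) * (real_of_int b ^ M' * y)"
    by (simp add: power_add algebra_simps)
  show ?thesis
    using assms unfolding scaled_int_def eq by (rule Ints_mult)
qed

lemma scaled_int_mono:
  assumes "scaled_int b M x" "M \<le> M'" shows "scaled_int b M' x"
  using scaled_int_mult[OF scaled_int_of_int[of b "M' - M" 1] assms(1)] assms(2) by simp

lemma scaled_int_scale: "scaled_int b M x \<Longrightarrow> scaled_int b M (of_int c * x)"
  using scaled_int_mult[OF scaled_int_of_int[of b 0 c]] by simp

lemma scaled_int_power: "scaled_int b M x \<Longrightarrow> scaled_int b (M * n) (x ^ n)"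
proof (induction n)
  case 0
  then show ?case using scaled_int_of_int[of b 0 1] by simp
next
  case (Suc n)
  then show ?case using scaled_int_mult[of b M x "M * n" "x ^ n"] by (simp add: add.commute)
qed

lemma scaled_int_sum:
  "finite S \<Longrightarrow> (\<And>i. i \<in> S \<Longrightarrow> scaled_int b M (f i)) \<Longrightarrow> scaled_int b M (\<Sum>i\<in>S. f i)"
proof (induction S rule: finite_induct)
  case empty
  then show ?case using scaled_int_of_int[of b M 0] by simp
qed (simp add: scaled_int_add)

lemma scaled_int_imp_zero:
  assumes "b \<noteq> 0" "scaled_int b M x" "\<bar>real_of_int b ^ M * x\<bar> < 1"
  shows "x = 0"
  using Ints_nonzero_abs_less1[of "real_of_int b ^ M * x"] assms unfolding scaled_int_def by simp

lemma scaled_int_mahler_factor: "scaled_int b m x \<Longrightarrow> scaled_int b (2 * m) (mahler_factor x)"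
  unfolding mahler_factor_def
  using scaled_int_power[of b m x 2] scaled_int_mono[of b m x "2 * m"] scaled_int_of_int[of b "2 * m" 1]
  by (simp add: scaled_int_add mult.commute)

lemma scaled_int_mahler_prod: "scaled_int b 1 z \<Longrightarrow> scaled_int b (2 * 2 ^ k) (mahler_prod k z)"
proof (induction k)
  case 0
  then show ?case using scaled_int_of_int[of b 2 1] by (simp add: mahler_prod_def)
next
  case (Suc k)
  have "scaled_int b (2 * 2 ^ k) (mahler_factor (z ^ 2 ^ k))"
    using scaled_int_power[OF Suc.prems] by (intro scaled_int_mahler_factor) simp
  then have "scaled_int b (2 * 2 ^ k + 2 * 2 ^ k) (mahler_prod k z * mahler_factor (z ^ 2 ^ k))"
    by (rule scaled_int_mult[OF Suc.IH[OF Suc.prems]])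
  then show ?case by (simp add: mahler_prod_Suc)
qed

lemma scaled_int_mahler_sum: "scaled_int b 1 z \<Longrightarrow> scaled_int b (2 ^ k) (mahler_sum k z)"
proof (induction k)
  case 0
  then show ?case using scaled_int_of_int[of b 1 0] by simp
next
  case (Suc k)
  have "scaled_int b (2 ^ Suc k) (of_int (2 * (-1) ^ k) * mahler_prod k z)"
    using scaled_int_mahler_prod[OF Suc.prems, of k] by (intro scaled_int_scale) simp
  moreover have "scaled_int b (2 ^ Suc k) (mahler_sum k z)"
    by (rule scaled_int_mono[OF Suc.IH[OF Suc.prems]]) simp
  ultimately show ?case by (simp add: scaled_int_add)
qed

definition peval :: "int list \<Rightarrow> real \<Rightarrow> real" where
  "peval xs w = (\<Sum>i<length xs. real_of_int (xs ! i) * w ^ i)"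

lemma peval_Nil [simp]: "peval [] w = 0"
  by (simp add: peval_def)

lemma peval_Cons [simp]: "peval (x # xs) w = real_of_int x + w * peval xs w"
  unfolding peval_def
  by (simp add: sum.lessThan_Suc_shift sum_distrib_left algebra_simps del: sum.lessThan_Suc)

lemma tendsto_peval: "(f \<longlongrightarrow> w) F \<Longrightarrow> ((\<lambda>x. peval xs (f x)) \<longlongrightarrow> peval xs w) F"
  unfolding peval_def by (intro tendsto_intros)

lemma abs_peval_le: "\<bar>w\<bar> \<le> 1 \<Longrightarrow> \<bar>peval xs w\<bar> \<le> (\<Sum>i<length xs. \<bar>real_of_int (xs ! i)\<bar>)"
  unfolding peval_def
  by (rule order.trans[OF sum_abs sum_mono])
     (simp add: abs_mult power_abs mult_left_le power_le_one)

lemma scaled_int_peval: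
  assumes "scaled_int b m w" "length xs \<le> Suc d"
  shows "scaled_int b (m * d) (peval xs w)"
  unfolding peval_def
proof (intro scaled_int_sum scaled_int_scale)
  fix i assume "i \<in> {..<length xs}"
  then have "m * i \<le> m * d" using assms(2) by (simp add: less_Suc_eq_le)
  then show "scaled_int b (m * d) (w ^ i)"
    by (rule scaled_int_mono[OF scaled_int_power[OF assms(1)]])
qed simp

section \<open>Linear forms in A and B\<close>

definition form_coeff :: "int list \<Rightarrow> int list \<Rightarrow> int list \<Rightarrow> nat \<Rightarrow> int" where
  "form_coeff ps qs rs n = (if n < length ps then ps ! n else 0)
    + (\<Sum>i<length qs. if i \<le> n then qs ! i * stern (n - i + 1) else 0)
    + (\<Sum>i<length rs. if i \<le> n then rs ! i * twisted_stern (n - i + 1) else 0)"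

definition form_value :: "int list \<Rightarrow> int list \<Rightarrow> int list \<Rightarrow> real \<Rightarrow> real" where
  "form_value ps qs rs w = peval ps w + peval qs w * stern_A w + peval rs w * stern_B w"

definition form_height :: "int list \<Rightarrow> int list \<Rightarrow> int list \<Rightarrow> real" where
  "form_height ps qs rs = (\<Sum>i<length ps. \<bar>real_of_int (ps ! i)\<bar>)
     + (\<Sum>i<length qs. \<bar>real_of_int (qs ! i)\<bar>) + (\<Sum>i<length rs. \<bar>real_of_int (rs ! i)\<bar>)"

lemma form_height_nonneg: "form_height ps qs rs \<ge> 0"
  unfolding form_height_def by (intro add_nonneg_nonneg sum_nonneg) auto

lemma abs_peval_le_form_height:
  assumes "\<bar>w\<bar> \<le> 1"
  shows "\<bar>peval qs w\<bar> \<le> form_height ps qs rs" and "\<bar>peval rs w\<bar> \<le> form_height ps qs rs"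
proof -
  have "0 \<le> (\<Sum>i<length ps. \<bar>real_of_int (ps ! i)\<bar>)" "0 \<le> (\<Sum>i<length qs. \<bar>real_of_int (qs ! i)\<bar>)"
    "0 \<le> (\<Sum>i<length rs. \<bar>real_of_int (rs ! i)\<bar>)"
    by (auto intro: sum_nonneg)
  then show "\<bar>peval qs w\<bar> \<le> form_height ps qs rs" "\<bar>peval rs w\<bar> \<le> form_height ps qs rs"
    using abs_peval_le[OF assms, of qs] abs_peval_le[OF assms, of rs] unfolding form_height_def
    by linarith+
qed

lemma sums_poly_times_series:
  fixes w :: real and f :: "nat \<Rightarrow> int"
  assumes S: "(\<lambda>n. real_of_int (f (n + 1)) * w ^ n) sums S"
  shows "(\<lambda>n. real_of_int (\<Sum>i<length qs. if i \<le> n then qs ! i * f (n - i + 1) else 0) * w ^ n)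
           sums (peval qs w * S)"
proof -
  have shifted: "(\<lambda>n. real_of_int (if i \<le> n then c * f (n - i + 1) else 0) * w ^ n)
                   sums (real_of_int c * w ^ i * S)" for i c
  proof -
    have "(\<lambda>n. (real_of_int c * w ^ i) * (real_of_int (f (n + 1)) * w ^ n)) sums (real_of_int c * w ^ i * S)"
      using sums_mult[OF S] by simp
    then have "(\<lambda>n. real_of_int (if i \<le> n + i then c * f (n + i - i + 1) else 0) * w ^ (n + i))
                 sums (real_of_int c * w ^ i * S)"
      by (simp add: power_add algebra_simps)
    then show ?thesis by (subst (asm) sums_zero_iff_shift) auto
  qed
  have "(\<lambda>n. \<Sum>i<length qs. real_of_int (if i \<le> n then qs ! i * f (n - i + 1) else 0) * w ^ n)
        sums (\<Sum>i<length qs. real_of_int (qs ! i) * w ^ i * S)"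
    by (intro sums_sum shifted)
  then show ?thesis by (simp add: peval_def sum_distrib_right of_int_sum)
qed

lemma form_value_sums:
  fixes w :: real assumes w: "\<bar>w\<bar> < 1"
  shows "(\<lambda>n. real_of_int (form_coeff ps qs rs n) * w ^ n) sums form_value ps qs rs w"
proof -
  have "(\<lambda>n. real_of_int (if n < length ps then ps ! n else 0) * w ^ n) sums
          (\<Sum>n<length ps. real_of_int (if n < length ps then ps ! n else 0) * w ^ n)"
    by (rule sums_finite) auto
  then have "(\<lambda>n. real_of_int (if n < length ps then ps ! n else 0) * w ^ n) sums peval ps w"
    by (simp add: peval_def)
  from sums_add[OF sums_add[OF this sums_poly_times_series] sums_poly_times_series]
  show ?thesis
    using stern_A_sums[OF w] stern_B_sums[OF w]
    unfolding form_value_def form_coeff_def by (simp add: distrib_right)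
qed

lemma abs_convolution_le:
  fixes xs :: "int list" and f :: "nat \<Rightarrow> int"
  assumes f: "\<And>m. m \<le> Suc n \<Longrightarrow> \<bar>f m\<bar> \<le> int (Suc n)"
  shows "\<bar>real_of_int (\<Sum>i<length xs. if i \<le> n then xs ! i * f (n - i + 1) else 0)\<bar>
         \<le> (\<Sum>i<length xs. \<bar>real_of_int (xs ! i)\<bar>) * real (Suc n)"
proof -
  have "\<bar>real_of_int (if i \<le> n then xs ! i * f (n - i + 1) else 0)\<bar>
          \<le> \<bar>real_of_int (xs ! i)\<bar> * real (Suc n)" for i
  proof (cases "i \<le> n")
    case True
    then have "\<bar>real_of_int (f (n - i + 1))\<bar> \<le> real (Suc n)"
      using f[of "n - i + 1"] by (metis Suc_eq_plus1 add_le_mono1 diff_le_self of_int_abs of_int_le_iff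
          of_int_of_nat_eq)
    then show ?thesis using True by (simp add: abs_mult mult_left_mono)
  qed simp
  then have "\<bar>real_of_int (\<Sum>i<length xs. if i \<le> n then xs ! i * f (n - i + 1) else 0)\<bar>
      \<le> (\<Sum>i<length xs. \<bar>real_of_int (xs ! i)\<bar> * real (Suc n))"
    unfolding of_int_sum by (intro order.trans[OF sum_abs sum_mono])
  then show ?thesis by (simp add: sum_distrib_right)
qed

lemma abs_form_coeff_le: "\<bar>real_of_int (form_coeff ps qs rs n)\<bar> \<le> form_height ps qs rs * real (Suc n)"
proof -
  let ?h = "\<lambda>xs. \<Sum>i<length xs. \<bar>real_of_int (xs ! i)\<bar>"
  have "\<bar>real_of_int (if n < length ps then ps ! n else 0)\<bar> \<le> ?h ps * real (Suc n)"
  proof (cases "n < length ps")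
    case True
    then have "\<bar>real_of_int (ps ! n)\<bar> \<le> ?h ps" by (intro member_le_sum) auto
    also have "\<dots> \<le> ?h ps * real (Suc n)"
      using mult_left_mono[of 1 "real (Suc n)" "?h ps"] by (simp add: sum_nonneg)
    finally show ?thesis using True by simp
  qed (simp add: sum_nonneg)
  moreover have "\<bar>real_of_int (\<Sum>i<length qs. if i \<le> n then qs ! i * stern (n - i + 1) else 0)\<bar>
                   \<le> ?h qs * real (Suc n)"
  proof (rule abs_convolution_le)
    show "\<bar>stern m\<bar> \<le> int (Suc n)" if "m \<le> Suc n" for m
      using abs_stern_le[of m] that by simp
  qed
  moreover have "\<bar>real_of_int (\<Sum>i<length rs. if i \<le> n then rs ! i * twisted_stern (n - i + 1) else 0)\<bar>
                   \<le> ?h rs * real (Suc n)"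
  proof (rule abs_convolution_le)
    show "\<bar>twisted_stern m\<bar> \<le> int (Suc n)" if "m \<le> Suc n" for m
      using twisted_stern_abs_le[of m] that by simp
  qed
  ultimately show ?thesis
    unfolding form_coeff_def form_height_def of_int_add by (simp add: distrib_right)
qed

definition form_tail :: "int list \<Rightarrow> int list \<Rightarrow> int list \<Rightarrow> nat \<Rightarrow> real \<Rightarrow> real" where
  "form_tail ps qs rs N w = (\<Sum>i. real_of_int (form_coeff ps qs rs (i + N + 1)) * w ^ i)"

definition form_tail_bound :: "int list \<Rightarrow> int list \<Rightarrow> int list \<Rightarrow> nat \<Rightarrow> real \<Rightarrow> real" where
  "form_tail_bound ps qs rs N r = form_height ps qs rs * real (N + 2) / (1 - r)^2"

lemma form_tail:
  fixes w r :: real assumes r: "0 \<le> r" "r < 1" and w: "\<bar>w\<bar> \<le> r"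
  shows "(\<lambda>i. real_of_int (form_coeff ps qs rs (i + N + 1)) * w ^ i) sums form_tail ps qs rs N w"
    and "\<bar>form_tail ps qs rs N w\<bar> \<le> form_tail_bound ps qs rs N r"
proof -
  let ?H = "form_height ps qs rs * real (N + 2)"
  have major: "norm (real_of_int (form_coeff ps qs rs (i + N + 1)) * w ^ i) \<le> ?H * (real (Suc i) * r ^ i)" for i
  proof -
    have "norm (real_of_int (form_coeff ps qs rs (i + N + 1)) * w ^ i)
        = \<bar>real_of_int (form_coeff ps qs rs (i + N + 1))\<bar> * \<bar>w\<bar> ^ i"
      by (simp add: abs_mult power_abs)
    also have "\<dots> \<le> (form_height ps qs rs * real (Suc (i + N + 1))) * r ^ i"
      using abs_form_coeff_le[of ps qs rs "i + N + 1"] w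
      by (intro mult_mono power_mono) (auto simp: form_height_nonneg)
    also have "\<dots> \<le> (form_height ps qs rs * (real (N + 2) * real (Suc i))) * r ^ i"
    proof -
      have "Suc (i + N + 1) \<le> (N + 2) * Suc i" by (simp add: algebra_simps)
      then have "real (Suc (i + N + 1)) \<le> real (N + 2) * real (Suc i)"
        by (metis of_nat_le_iff of_nat_mult)
      then show ?thesis
        using r form_height_nonneg[of ps qs rs] by (intro mult_right_mono mult_left_mono) auto
    qed
    finally show ?thesis by (simp add: algebra_simps)
  qed
  have geo: "(\<lambda>i. ?H * (real (Suc i) * r ^ i)) sums (?H * (1 / (1 - r)^2))"
    using geometric_deriv_sums[of r] r by (intro sums_mult) simp
  show "(\<lambda>i. real_of_int (form_coeff ps qs rs (i + N + 1)) * w ^ i) sums form_tail ps qs rs N w"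
    unfolding form_tail_def
    by (intro summable_sums summable_comparison_test'[OF sums_summable[OF geo]] major)
  have "norm (form_tail ps qs rs N w) \<le> (\<Sum>i. ?H * (real (Suc i) * r ^ i))"
    unfolding form_tail_def by (rule norm_suminf_le[OF major sums_summable[OF geo]])
  then show "\<bar>form_tail ps qs rs N w\<bar> \<le> form_tail_bound ps qs rs N r"
    using sums_unique[OF geo] by (simp add: form_tail_bound_def)
qed

lemma form_value_expand:
  fixes w r :: real assumes r: "0 \<le> r" "r < 1" and w: "\<bar>w\<bar> \<le> r"
    and vanish: "\<And>n. n < N \<Longrightarrow> form_coeff ps qs rs n = 0"
  shows "form_value ps qs rs w = w ^ N * (real_of_int (form_coeff ps qs rs N) + w * form_tail ps qs rs N w)"
proof -
  let ?f = "\<lambda>n. real_of_int (form_coeff ps qs rs n) * w ^ n"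
  have "(\<lambda>i. ?f (i + Suc N)) sums (form_value ps qs rs w - (\<Sum>i<Suc N. ?f i))"
    using form_value_sums[of w] w r by (subst sums_iff_shift) simp
  moreover have "(\<lambda>i. ?f (i + Suc N)) sums (w ^ Suc N * form_tail ps qs rs N w)"
  proof -
    have "(\<lambda>i. w ^ Suc N * (real_of_int (form_coeff ps qs rs (i + N + 1)) * w ^ i))
            sums (w ^ Suc N * form_tail ps qs rs N w)"
      by (intro sums_mult form_tail(1)[OF r w])
    moreover have "(\<lambda>i. w ^ Suc N * (real_of_int (form_coeff ps qs rs (i + N + 1)) * w ^ i))
                     = (\<lambda>i. ?f (i + Suc N))"
      by (simp add: power_add algebra_simps)
    ultimately show ?thesis by simp
  qed
  ultimately have "form_value ps qs rs w - (\<Sum>i<Suc N. ?f i) = w ^ Suc N * form_tail ps qs rs N w"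
    by (rule sums_unique2)
  moreover have "(\<Sum>i<Suc N. ?f i) = real_of_int (form_coeff ps qs rs N) * w ^ N"
    using vanish by simp
  ultimately show ?thesis by (simp add: algebra_simps)
qed

lemma abs_form_value_le:
  fixes w r :: real assumes r: "0 \<le> r" "r < 1" and w: "\<bar>w\<bar> \<le> r"
    and vanish: "\<And>n. n < N \<Longrightarrow> form_coeff ps qs rs n = 0"
  shows "\<bar>form_value ps qs rs w\<bar>
           \<le> (\<bar>real_of_int (form_coeff ps qs rs N)\<bar> + form_tail_bound ps qs rs N r) * \<bar>w\<bar> ^ N"
proof -
  have "\<bar>w * form_tail ps qs rs N w\<bar> \<le> 1 * form_tail_bound ps qs rs N r"
    unfolding abs_mult using form_tail(2)[OF r w] w r by (intro mult_mono) auto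
  then have "\<bar>real_of_int (form_coeff ps qs rs N) + w * form_tail ps qs rs N w\<bar>
               \<le> \<bar>real_of_int (form_coeff ps qs rs N)\<bar> + form_tail_bound ps qs rs N r"
    by linarith
  then have "\<bar>w\<bar> ^ N * \<bar>real_of_int (form_coeff ps qs rs N) + w * form_tail ps qs rs N w\<bar>
               \<le> \<bar>w\<bar> ^ N * (\<bar>real_of_int (form_coeff ps qs rs N)\<bar> + form_tail_bound ps qs rs N r)"
    by (rule mult_left_mono) simp
  moreover have "\<bar>form_value ps qs rs w\<bar>
      = \<bar>w\<bar> ^ N * \<bar>real_of_int (form_coeff ps qs rs N) + w * form_tail ps qs rs N w\<bar>"
    using form_value_expand[OF r w vanish] by (simp add: abs_mult power_abs)
  ultimately show ?thesis by (simp add: mult.commute)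
qed

definition det3 :: "'a::comm_ring \<Rightarrow> 'a \<Rightarrow> 'a \<Rightarrow> 'a \<Rightarrow> 'a \<Rightarrow> 'a \<Rightarrow> 'a \<Rightarrow> 'a \<Rightarrow> 'a \<Rightarrow> 'a" where
  "det3 a0 b0 c0 a1 b1 c1 a2 b2 c2 =
     a0 * (b1 * c2 - b2 * c1) - a1 * (b0 * c2 - b2 * c0) + a2 * (b0 * c1 - b1 * c0)"

lemma det3_of_int:
  "det3 (of_int a0) (of_int b0) (of_int c0) (of_int a1) (of_int b1) (of_int c1)
        (of_int a2) (of_int b2) (of_int c2) = (of_int (det3 a0 b0 c0 a1 b1 c1 a2 b2 c2) :: 'a::comm_ring_1)"
  by (simp add: det3_def)

lemma det3_add_columns:
  "det3 (a0 + b0 * A + c0 * B) b0 c0 (a1 + b1 * A + c1 * B) b1 c1 (a2 + b2 * A + c2 * B) b2 c2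
     = det3 a0 b0 c0 a1 b1 c1 a2 b2 c2"
  by (simp add: det3_def algebra_simps)

lemma det3_scale_column:
  "det3 (t * a0) b0 c0 (t * a1) b1 c1 (t * a2) b2 c2 = t * det3 a0 b0 c0 a1 b1 c1 a2 b2 c2"
  by (simp add: det3_def algebra_simps)

lemma det3_kernel:
  fixes x y u :: "'a::idom"
  assumes "det3 a0 b0 c0 a1 b1 c1 a2 b2 c2 \<noteq> 0"
    and "a0 * x + b0 * y + c0 * u = 0" "a1 * x + b1 * y + c1 * u = 0" "a2 * x + b2 * y + c2 * u = 0"
  shows "x = 0"
proof -
  have "det3 a0 b0 c0 a1 b1 c1 a2 b2 c2 * x =
     (a0 * x + b0 * y + c0 * u) * (b1 * c2 - b2 * c1) - (a1 * x + b1 * y + c1 * u) * (b0 * c2 - b2 * c0)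
     + (a2 * x + b2 * y + c2 * u) * (b0 * c1 - b1 * c0)"
    unfolding det3_def by (simp add: algebra_simps)
  with assms show ?thesis by simp
qed

text \<open>Write w = z^(2^k), C = mahler_prod k z and S = mahler_sum k z. For the form
  L = ps + qs A + rs B, the iterated Mahler equations give P + Q A(z) + R B(z) = C L(w) with
  P = C ps(w) - (-1)^k S rs(w), Q = qs(w) and R = (-1)^k rs(w); \<open>lift_form\<close> is q P + p1 Q + p2 R.\<close>

definition lift_form :: "nat \<Rightarrow> real \<Rightarrow> int list \<Rightarrow> int list \<Rightarrow> int list \<Rightarrow> int \<Rightarrow> int \<Rightarrow> int \<Rightarrow> real" where
  "lift_form k z ps qs rs q p1 p2 =
     of_int q * (mahler_prod k z * peval ps (z ^ 2 ^ k) - (-1) ^ k * mahler_sum k z * peval rs (z ^ 2 ^ k))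
     + of_int p1 * peval qs (z ^ 2 ^ k) + of_int p2 * ((-1) ^ k * peval rs (z ^ 2 ^ k))"

lemma lift_form_eq:
  fixes z :: real
  assumes z: "\<bar>z\<bar> < 1"
  shows "lift_form k z ps qs rs q p1 p2
    = of_int q * mahler_prod k z * form_value ps qs rs (z ^ 2 ^ k)
      - peval qs (z ^ 2 ^ k) * (of_int q * stern_A z - of_int p1)
      - (-1) ^ k * peval rs (z ^ 2 ^ k) * (of_int q * stern_B z - of_int p2)"
proof -
  have "((-1) ^ k * (-1) ^ k :: real) = 1" by (simp add: power_mult_distrib[symmetric])
  then show ?thesis
    using stern_AB_iterate[OF z, of k]
    unfolding lift_form_def form_value_def by (simp add: algebra_simps)
qed

lemma lift_form_eq_combination:
  "lift_form k z ps qs rs q p1 p2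
     = peval ps (z ^ 2 ^ k) * (of_int q * mahler_prod k z) + peval qs (z ^ 2 ^ k) * of_int p1
       + peval rs (z ^ 2 ^ k) * ((-1) ^ k * (of_int p2 - of_int q * mahler_sum k z))"
  unfolding lift_form_def by (simp add: algebra_simps)

lemma abs_lift_form_le:
  fixes q p1 p2 :: int
  assumes z: "\<bar>z\<bar> < 1" and vanish: "\<And>n. n < N \<Longrightarrow> form_coeff ps qs rs n = 0" and q: "q \<ge> 0"
  shows "\<bar>lift_form k z ps qs rs q p1 p2\<bar>
     \<le> of_int q * 3 ^ k * ((\<bar>real_of_int (form_coeff ps qs rs N)\<bar> + form_tail_bound ps qs rs N \<bar>z\<bar>)
          * \<bar>z\<bar> ^ (2 ^ k * N))
       + form_height ps qs rs * (\<bar>of_int q * stern_A z - of_int p1\<bar> + \<bar>of_int q * stern_B z - of_int p2\<bar>)"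
proof -
  let ?w = "z ^ 2 ^ k" and ?K = "\<bar>real_of_int (form_coeff ps qs rs N)\<bar> + form_tail_bound ps qs rs N \<bar>z\<bar>"
  have "\<bar>z\<bar> ^ 2 ^ k \<le> \<bar>z\<bar> ^ 1" using z by (intro power_decreasing) auto
  then have wz: "\<bar>?w\<bar> \<le> \<bar>z\<bar>" by (simp add: power_abs)
  have "\<bar>mahler_prod k z * form_value ps qs rs ?w\<bar> \<le> 3 ^ k * (?K * \<bar>?w\<bar> ^ N)"
    unfolding abs_mult using mahler_prod_le[of z k] z abs_form_value_le[of "\<bar>z\<bar>" ?w N ps qs rs] wz vanish
    by (intro mult_mono) auto
  then have t1: "\<bar>of_int q * mahler_prod k z * form_value ps qs rs ?w\<bar>
                   \<le> of_int q * 3 ^ k * (?K * \<bar>z\<bar> ^ (2 ^ k * N))"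
    using q by (simp add: abs_mult power_abs power_mult mult.assoc mult_left_mono)
  have "\<bar>?w\<bar> \<le> 1" using wz z by simp
  from abs_peval_le_form_height[OF this, of qs ps rs] abs_peval_le_form_height[OF this, of rs ps qs]
  have t2: "\<bar>peval qs ?w * (of_int q * stern_A z - of_int p1)\<bar>
              \<le> form_height ps qs rs * \<bar>of_int q * stern_A z - of_int p1\<bar>"
    and t3: "\<bar>(-1) ^ k * peval rs ?w * (of_int q * stern_B z - of_int p2)\<bar>
              \<le> form_height ps qs rs * \<bar>of_int q * stern_B z - of_int p2\<bar>"
    by (auto simp: abs_mult power_abs intro: mult_right_mono)
  show ?thesis
    unfolding lift_form_eq[OF z] using t1 t2 t3 by (simp add: distrib_left) linarith
qed

lemma scaled_int_lift_form:
  fixes q p1 p2 a b :: int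
  assumes b: "b \<noteq> 0" and D: "D \<ge> 2"
    and lengths: "length ps \<le> D - 1" "length qs \<le> D + 1" "length rs \<le> D"
  shows "scaled_int b (2 ^ k * D) (lift_form k (of_int a / of_int b) ps qs rs q p1 p2)"
proof -
  let ?z = "real_of_int a / real_of_int b"
  let ?w = "?z ^ 2 ^ k"
  have z: "scaled_int b 1 ?z" using scaled_int_divide[OF b] .
  have w: "scaled_int b (2 ^ k) ?w" using scaled_int_power[OF z, of "2 ^ k"] by simp
  obtain d where d: "D = d + 2" using D by (metis le_add_diff_inverse2)
  have P: "scaled_int b (2 ^ k * d) (peval ps ?w)"
    using scaled_int_peval[OF w, of ps d] lengths d by simp
  have Q: "scaled_int b (2 ^ k * D) (peval qs ?w)"
    using scaled_int_peval[OF w, of qs D] lengths by simp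
  have R: "scaled_int b (2 ^ k * (d + 1)) (peval rs ?w)"
    using scaled_int_peval[OF w, of rs "d + 1"] lengths d by simp
  have "scaled_int b (2 * 2 ^ k + 2 ^ k * d) (mahler_prod k ?z * peval ps ?w)"
    by (rule scaled_int_mult[OF scaled_int_mahler_prod[OF z] P])
  moreover have "2 * 2 ^ k + 2 ^ k * d = 2 ^ k * D" by (simp add: d algebra_simps)
  ultimately have t1: "scaled_int b (2 ^ k * D) (mahler_prod k ?z * peval ps ?w)"
    by simp
  have "scaled_int b (2 ^ k + 2 ^ k * (d + 1)) (mahler_sum k ?z * peval rs ?w)"
    by (rule scaled_int_mult[OF scaled_int_mahler_sum[OF z] R])
  moreover have "2 ^ k + 2 ^ k * (d + 1) = 2 ^ k * D" by (simp add: d algebra_simps)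
  ultimately have t2: "scaled_int b (2 ^ k * D) (mahler_sum k ?z * peval rs ?w)"
    by simp
  have t3: "scaled_int b (2 ^ k * D) (peval rs ?w)"
    by (rule scaled_int_mono[OF R]) (simp add: d)
  have "scaled_int b (2 ^ k * D)
      (mahler_prod k ?z * peval ps ?w - of_int ((-1) ^ k) * (mahler_sum k ?z * peval rs ?w))"
    by (rule scaled_int_diff[OF t1 scaled_int_scale[OF t2]])
  then have "scaled_int b (2 ^ k * D)
      (of_int q * (mahler_prod k ?z * peval ps ?w - (-1) ^ k * mahler_sum k ?z * peval rs ?w))"
    by (intro scaled_int_scale) (simp add: mult.assoc)
  moreover have "scaled_int b (2 ^ k * D) (of_int p2 * (of_int ((-1) ^ k) * peval rs ?w))"
    by (intro scaled_int_scale t3)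
  ultimately show ?thesis
    unfolding lift_form_def using scaled_int_scale[OF Q, of p1] by (simp add: scaled_int_add)
qed

lemma lift_forms_independent:
  assumes "det3 (peval ps0 (z ^ 2 ^ k)) (peval qs0 (z ^ 2 ^ k)) (peval rs0 (z ^ 2 ^ k))
                (peval ps1 (z ^ 2 ^ k)) (peval qs1 (z ^ 2 ^ k)) (peval rs1 (z ^ 2 ^ k))
                (peval ps2 (z ^ 2 ^ k)) (peval qs2 (z ^ 2 ^ k)) (peval rs2 (z ^ 2 ^ k)) \<noteq> 0"
    and "lift_form k z ps0 qs0 rs0 q p1 p2 = 0" "lift_form k z ps1 qs1 rs1 q p1 p2 = 0"
    and "lift_form k z ps2 qs2 rs2 q p1 p2 = 0"
  shows "q = 0"
proof -
  have "of_int q * mahler_prod k z = 0"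
    using det3_kernel[OF assms(1)] assms(2-4) unfolding lift_form_eq_combination by blast
  then show ?thesis using mahler_prod_pos[of k z] by simp
qed

lemma power_2_power_tendsto_0:
  fixes z :: real assumes z: "\<bar>z\<bar> < 1"
  shows "(\<lambda>k. z ^ 2 ^ k) \<longlonglongrightarrow> 0"
proof (rule tendsto_0_le[where K = 1])
  show "(\<lambda>k. \<bar>z\<bar> ^ k) \<longlonglongrightarrow> 0" using z by (intro LIMSEQ_power_zero) auto
  have "\<bar>z\<bar> ^ 2 ^ k \<le> \<bar>z\<bar> ^ k" for k
    using z less_exp[of k] by (intro power_decreasing) auto
  then show "\<forall>\<^sub>F k in sequentially. norm (z ^ 2 ^ k) \<le> norm (\<bar>z\<bar> ^ k) * 1"
    by (simp add: power_abs)
qed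

text \<open>Adding A(w) times the second and B(w) times the third column to the first turns it into the
  form values, each w^N times a function tending to the N-th coefficient; so the determinant at
  w = z^(2^k) is w^N times a quantity tending to the limit determinant.\<close>

lemma det3_peval_eventually_nonzero:
  fixes z :: real
  assumes z: "\<bar>z\<bar> < 1" "z \<noteq> 0"
    and vanish0: "\<And>n. n < N \<Longrightarrow> form_coeff ps0 qs0 rs0 n = 0"
    and vanish1: "\<And>n. n < N \<Longrightarrow> form_coeff ps1 qs1 rs1 n = 0"
    and vanish2: "\<And>n. n < N \<Longrightarrow> form_coeff ps2 qs2 rs2 n = 0"
    and limit: "det3 (of_int (form_coeff ps0 qs0 rs0 N)) (peval qs0 0) (peval rs0 0)
                     (of_int (form_coeff ps1 qs1 rs1 N)) (peval qs1 0) (peval rs1 0)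
                     (of_int (form_coeff ps2 qs2 rs2 N)) (peval qs2 0) (peval rs2 0) \<noteq> 0"
  shows "eventually (\<lambda>k. det3 (peval ps0 (z ^ 2 ^ k)) (peval qs0 (z ^ 2 ^ k)) (peval rs0 (z ^ 2 ^ k))
                           (peval ps1 (z ^ 2 ^ k)) (peval qs1 (z ^ 2 ^ k)) (peval rs1 (z ^ 2 ^ k))
                           (peval ps2 (z ^ 2 ^ k)) (peval qs2 (z ^ 2 ^ k)) (peval rs2 (z ^ 2 ^ k)) \<noteq> 0)
           sequentially"
proof -
  define w where "w k = z ^ 2 ^ k" for k
  have wz: "\<bar>w k\<bar> \<le> \<bar>z\<bar>" for k
  proof -
    have "\<bar>z\<bar> ^ 2 ^ k \<le> \<bar>z\<bar> ^ 1" using z by (intro power_decreasing) auto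
    then show ?thesis by (simp add: power_abs w_def)
  qed
  have w0: "w \<longlonglongrightarrow> 0" unfolding w_def by (rule power_2_power_tendsto_0[OF z(1)])
  have r: "0 \<le> \<bar>z\<bar>" "\<bar>z\<bar> < 1" using z by auto
  define g where "g ps qs rs k = of_int (form_coeff ps qs rs N) + w k * form_tail ps qs rs N (w k)"
    for ps qs rs k
  have g_tendsto: "(g ps qs rs \<longlongrightarrow> of_int (form_coeff ps qs rs N)) sequentially" for ps qs rs
  proof -
    have "(\<lambda>k. w k * form_tail ps qs rs N (w k)) \<longlonglongrightarrow> 0"
    proof (rule tendsto_0_le[OF w0, where K = "form_tail_bound ps qs rs N \<bar>z\<bar>"])
      show "\<forall>\<^sub>F k in sequentially. norm (w k * form_tail ps qs rs N (w k))
                                   \<le> norm (w k) * form_tail_bound ps qs rs N \<bar>z\<bar>"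
        using form_tail(2)[OF r wz] by (intro always_eventually allI) (simp add: abs_mult mult_left_mono)
    qed
    then show ?thesis unfolding g_def using tendsto_add[OF tendsto_const] by fastforce
  qed
  have peval_eq: "peval ps (w k) = form_value ps qs rs (w k) + peval qs (w k) * (- stern_A (w k))
                    + peval rs (w k) * (- stern_B (w k))" for ps qs rs k
    by (simp add: form_value_def)
  have value_eq: "form_value ps qs rs (w k) = w k ^ N * g ps qs rs k"
    if "\<And>n. n < N \<Longrightarrow> form_coeff ps qs rs n = 0" for ps qs rs k
    unfolding g_def by (rule form_value_expand[OF r wz that])
  have form_values: "form_value ps0 qs0 rs0 (w k) = w k ^ N * g ps0 qs0 rs0 k"
    "form_value ps1 qs1 rs1 (w k) = w k ^ N * g ps1 qs1 rs1 k"
    "form_value ps2 qs2 rs2 (w k) = w k ^ N * g ps2 qs2 rs2 k" for k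
    using value_eq vanish0 vanish1 vanish2 by blast+
  have det_eq: "det3 (peval ps0 (w k)) (peval qs0 (w k)) (peval rs0 (w k))
                     (peval ps1 (w k)) (peval qs1 (w k)) (peval rs1 (w k))
                     (peval ps2 (w k)) (peval qs2 (w k)) (peval rs2 (w k))
      = w k ^ N * det3 (g ps0 qs0 rs0 k) (peval qs0 (w k)) (peval rs0 (w k))
                       (g ps1 qs1 rs1 k) (peval qs1 (w k)) (peval rs1 (w k))
                       (g ps2 qs2 rs2 k) (peval qs2 (w k)) (peval rs2 (w k))" for k
    unfolding peval_eq[of ps0 k qs0 rs0] peval_eq[of ps1 k qs1 rs1] peval_eq[of ps2 k qs2 rs2]
      det3_add_columns unfolding form_values det3_scale_column ..
  have "(\<lambda>k. det3 (g ps0 qs0 rs0 k) (peval qs0 (w k)) (peval rs0 (w k))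
                  (g ps1 qs1 rs1 k) (peval qs1 (w k)) (peval rs1 (w k))
                  (g ps2 qs2 rs2 k) (peval qs2 (w k)) (peval rs2 (w k)))
     \<longlonglongrightarrow> det3 (of_int (form_coeff ps0 qs0 rs0 N)) (peval qs0 0) (peval rs0 0)
              (of_int (form_coeff ps1 qs1 rs1 N)) (peval qs1 0) (peval rs1 0)
              (of_int (form_coeff ps2 qs2 rs2 N)) (peval qs2 0) (peval rs2 0)"
    unfolding det3_def by (intro tendsto_intros g_tendsto tendsto_peval w0)
  from tendsto_imp_eventually_ne[OF this limit] show ?thesis
    by eventually_elim (use det_eq z(2) in \<open>simp add: w_def\<close>)
qed

section \<open>Approximation exponents\<close>

definition approx_denominators_bounded :: "real \<Rightarrow> real \<Rightarrow> real \<Rightarrow> bool" where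
  "approx_denominators_bounded \<alpha>1 \<alpha>2 \<mu> \<longleftrightarrow> (\<exists>Q. \<forall>q p1 p2 :: int. q \<ge> 1 \<longrightarrow>
      \<bar>\<alpha>1 - of_int p1 / of_int q\<bar> < of_int q powr (- \<mu>) \<longrightarrow>
      \<bar>\<alpha>2 - of_int p2 / of_int q\<bar> < of_int q powr (- \<mu>) \<longrightarrow> real_of_int q \<le> Q)"

lemma finite_good_approximations:
  assumes mu: "\<mu> \<ge> 0" and bounded: "approx_denominators_bounded \<alpha>1 \<alpha>2 \<mu>"
  shows "finite {(q::int, ps::int list). q \<ge> 1 \<and> length ps = length [\<alpha>1, \<alpha>2] \<and>
           (\<forall>i < length [\<alpha>1, \<alpha>2]. \<bar>[\<alpha>1, \<alpha>2] ! i - real_of_int (ps ! i) / real_of_int q\<bar>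
                                      < real_of_int q powr (- \<mu>))}" (is "finite ?S")
proof -
  obtain Q0 where Q0: "\<And>q p1 p2. q \<ge> 1 \<Longrightarrow> \<bar>\<alpha>1 - of_int p1 / of_int q\<bar> < of_int q powr (- \<mu>)
      \<Longrightarrow> \<bar>\<alpha>2 - of_int p2 / of_int q\<bar> < of_int q powr (- \<mu>) \<Longrightarrow> real_of_int q \<le> Q0"
    using bounded unfolding approx_denominators_bounded_def by blast
  define Q where "Q = max Q0 1"
  define P where "P = \<lceil>Q * (\<bar>\<alpha>1\<bar> + \<bar>\<alpha>2\<bar> + 1)\<rceil>"
  have "?S \<subseteq> {1..\<lceil>Q\<rceil>} \<times> {ps. set ps \<subseteq> {-P..P} \<and> length ps = 2}"
  proof clarify
    fix q :: int and ps :: "int list"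
    assume q1: "q \<ge> 1" and len: "length ps = length [\<alpha>1, \<alpha>2]"
      and close: "\<forall>i < length [\<alpha>1, \<alpha>2]. \<bar>[\<alpha>1, \<alpha>2] ! i - real_of_int (ps ! i) / real_of_int q\<bar>
                                          < real_of_int q powr (- \<mu>)"
    obtain p1 p2 where ps: "ps = [p1, p2]"
      using len by (auto simp: length_Suc_conv numeral_2_eq_2)
    have c1: "\<bar>\<alpha>1 - of_int p1 / of_int q\<bar> < of_int q powr (- \<mu>)" using close[rule_format, of 0] ps by simp
    have c2: "\<bar>\<alpha>2 - of_int p2 / of_int q\<bar> < of_int q powr (- \<mu>)" using close[rule_format, of 1] ps by simp
    have qQ: "real_of_int q \<le> Q" using Q0[OF q1 c1 c2] unfolding Q_def by simp
    have "real_of_int q powr (- \<mu>) \<le> real_of_int q powr 0"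
      using mu q1 by (intro powr_mono) auto
    then have small: "real_of_int q powr (- \<mu>) \<le> 1" using q1 by simp
    have "\<bar>real_of_int p\<bar> \<le> real_of_int P"
      if cp: "\<bar>\<alpha> - of_int p / of_int q\<bar> < of_int q powr (- \<mu>)" and al: "\<bar>\<alpha>\<bar> \<le> \<bar>\<alpha>1\<bar> + \<bar>\<alpha>2\<bar>" for p \<alpha>
    proof -
      have "\<bar>real_of_int p\<bar> = \<bar>of_int p / of_int q\<bar> * real_of_int q" using q1 by (simp add: abs_divide)
      also have "\<dots> \<le> (\<bar>\<alpha>\<bar> + 1) * real_of_int q" using cp small q1 by (intro mult_right_mono) auto
      also have "\<dots> \<le> (\<bar>\<alpha>1\<bar> + \<bar>\<alpha>2\<bar> + 1) * Q" using qQ q1 al by (intro mult_mono) auto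
      also have "\<dots> \<le> real_of_int P" unfolding P_def by (simp add: mult.commute le_of_int_ceiling)
      finally show ?thesis .
    qed
    from this[OF c1] this[OF c2] have "\<bar>p1\<bar> \<le> P" "\<bar>p2\<bar> \<le> P" by simp_all
    moreover have "q \<le> \<lceil>Q\<rceil>" using qQ le_of_int_ceiling[of Q] by linarith
    ultimately show "q \<in> {1..\<lceil>Q\<rceil>} \<and> ps \<in> {ps. set ps \<subseteq> {-P..P} \<and> length ps = 2}"
      using q1 ps by auto
  qed
  moreover have "finite ({1..\<lceil>Q\<rceil>} \<times> {ps. set ps \<subseteq> {-P..P} \<and> length ps = 2})"
    by (intro finite_cartesian_product finite_lists_length_eq) auto
  ultimately show ?thesis by (rule finite_subset)
qed

lemma sim_approx_exponent_le:
  assumes "\<beta> \<ge> 0" and "\<And>\<mu>. \<mu> > \<beta> \<Longrightarrow> approx_denominators_bounded \<alpha>1 \<alpha>2 \<mu>"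
  shows "sim_approx_exponent [\<alpha>1, \<alpha>2] \<le> ereal \<beta>"
  unfolding sim_approx_exponent_def
proof (rule Sup_least, clarify)
  fix \<mu> assume inf: "infinite {(q::int, ps::int list). q \<ge> 1 \<and> length ps = length [\<alpha>1, \<alpha>2] \<and>
      (\<forall>i < length [\<alpha>1, \<alpha>2]. \<bar>[\<alpha>1, \<alpha>2] ! i - real_of_int (ps ! i) / real_of_int q\<bar>
                                 < real_of_int q powr (- \<mu>))}"
  show "ereal \<mu> \<le> ereal \<beta>"
  proof (rule ccontr)
    assume "\<not> ereal \<mu> \<le> ereal \<beta>"
    then have "\<mu> > \<beta>" by simp
    with assms inf finite_good_approximations[of \<mu> \<alpha>1 \<alpha>2] show False by simp
  qed
qed

lemma abs_mult_sub_lt_exp: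
  fixes q p :: int
  assumes q: "q \<ge> 1" and close: "\<bar>\<alpha> - of_int p / of_int q\<bar> < of_int q powr (- \<mu>)"
  shows "\<bar>of_int q * \<alpha> - of_int p\<bar> < exp ((1 - \<mu>) * ln (real_of_int q))"
proof -
  have "\<bar>of_int q * \<alpha> - of_int p\<bar> = real_of_int q * \<bar>\<alpha> - of_int p / of_int q\<bar>"
    using q by (simp add: abs_mult[symmetric] field_simps)
  also have "\<dots> < real_of_int q * real_of_int q powr (- \<mu>)" using close q by simp
  also have "\<dots> = exp (ln (real_of_int q)) * exp (- \<mu> * ln (real_of_int q))"
    using q by (simp add: powr_def)
  also have "\<dots> = exp ((1 - \<mu>) * ln (real_of_int q))"
    by (simp add: exp_add[symmetric] algebra_simps)
  finally show ?thesis .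
qed

lemma eventually_linear_lt_exp2:
  fixes A B c :: real assumes c: "c > 0"
  shows "\<exists>k0. \<forall>k\<ge>k0. A + B * real k < c * 2 ^ k"
proof -
  have "(\<lambda>k. A * (1/2) ^ k + B * (real k * (1/2) ^ k)) \<longlonglongrightarrow> A * 0 + B * 0"
    by (intro tendsto_intros LIMSEQ_power_zero powser_times_n_limit_0) simp_all
  then have "eventually (\<lambda>k. A * (1/2) ^ k + B * (real k * (1/2) ^ k) < c) sequentially"
    using c by (intro order_tendstoD(2)) simp_all
  then have "eventually (\<lambda>k. A + B * real k < c * 2 ^ k) sequentially"
    by eventually_elim (simp add: field_simps power_divide)
  then show ?thesis unfolding eventually_sequentially by blast
qed

lemma covering_index:
  fixes lo hi :: "nat \<Rightarrow> real"
  assumes overlap: "\<And>t. t \<ge> t0 \<Longrightarrow> lo (Suc t) < hi t"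
    and unbounded: "u > t0" "x \<le> lo u" and x: "lo t0 < x"
  shows "\<exists>t \<ge> t0. lo t < x \<and> x < hi t"
proof -
  define S where "S = {s. t0 \<le> s \<and> x \<le> lo (Suc s)}"
  define t where "t = (LEAST s. s \<in> S)"
  have "u - 1 \<in> S" unfolding S_def using unbounded by auto
  then have "t \<in> S" unfolding t_def by (rule LeastI)
  then have t0t: "t0 \<le> t" and xl: "x \<le> lo (Suc t)" unfolding S_def by auto
  have "lo t < x"
  proof (cases "t = t0")
    case False
    then have "t - 1 \<notin> S" using t0t not_less_Least[of "t - 1" "\<lambda>s. s \<in> S"] unfolding t_def by auto
    then show ?thesis using t0t False unfolding S_def by (auto simp: not_le)
  qed (use x in simp)
  then show ?thesis using xl overlap[OF t0t] t0t by force
qed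

text \<open>Index t stands for the level k = t div m and the degree Dj j with j = t mod m. Consecutive
  windows overlap by the gap condition; after the last degree the cycle restarts one level higher,
  where Dj 0 at level k + 1 plays the role of 2 Dj 0 at level k.\<close>

lemma exists_window:
  fixes Dj Dn :: "nat \<Rightarrow> nat" and ej :: "nat \<Rightarrow> real"
  assumes m: "m > 0" and mu: "\<mu> > 1" and \<beta>: "\<beta> > 0"
    and gap: "\<And>j. j < m \<Longrightarrow> (\<mu> - 1) * ej j > real (Dn j)"
    and Dpos: "Dj 0 \<ge> 1"
    and Dnext: "\<And>j. j + 1 < m \<Longrightarrow> Dn j = Dj (j + 1)"
    and Dlast: "Dn (m - 1) = 2 * Dj 0"
  shows "\<exists>x0. \<forall>x > x0. \<exists>k \<ge> kd. \<exists>j < m.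
           (2 ^ k * real (Dj j) * \<beta> + C1) / (\<mu> - 1) < x \<and> x < 2 ^ k * ej j * \<beta> - real k * ln 3 - C2"
proof -
  define lo where "lo t = (2 ^ (t div m) * real (Dj (t mod m)) * \<beta> + C1) / (\<mu> - 1)" for t
  define hi where "hi t = 2 ^ (t div m) * ej (t mod m) * \<beta> - real (t div m) * ln 3 - C2" for t
  have lo_Suc: "lo (Suc t) = (2 ^ (t div m) * real (Dn (t mod m)) * \<beta> + C1) / (\<mu> - 1)" for t
  proof (cases "Suc (t mod m) < m")
    case True
    then have "Suc t div m = t div m" "Suc t mod m = Suc (t mod m)" by (simp_all add: div_Suc mod_Suc)
    then show ?thesis unfolding lo_def using Dnext[of "t mod m"] True by simp
  next
    case False
    then have "Suc (t mod m) = m" using m by (meson mod_less_divisor Suc_lessI)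
    then have "Suc t mod m = 0" "Suc t div m = Suc (t div m)" "t mod m = m - 1"
      by (simp_all add: div_Suc mod_Suc)
    then show ?thesis unfolding lo_def using Dlast by (simp add: algebra_simps)
  qed
  define \<gamma> where "\<gamma> = Min ((\<lambda>j. (\<mu> - 1) * ej j - real (Dn j)) ` {..<m})"
  have \<gamma>_le: "\<gamma> \<le> (\<mu> - 1) * ej j - real (Dn j)" if "j < m" for j
    unfolding \<gamma>_def using that by (intro Min_le) auto
  have \<gamma>_pos: "\<gamma> > 0" unfolding \<gamma>_def using m gap by (subst Min_gr_iff) auto
  obtain k0 where k0: "\<And>k. k \<ge> k0 \<Longrightarrow> C1 + (\<mu> - 1) * C2 + ((\<mu> - 1) * ln 3) * real k < (\<beta> * \<gamma>) * 2 ^ k"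
    using eventually_linear_lt_exp2[of "\<beta> * \<gamma>" "C1 + (\<mu> - 1) * C2" "(\<mu> - 1) * ln 3"] \<beta> \<gamma>_pos by auto
  define t0 where "t0 = max k0 kd * m"
  have level: "t div m \<ge> max k0 kd" if "t \<ge> t0" for t
    using div_le_mono[OF that, of m] m unfolding t0_def by simp
  have overlap: "lo (Suc t) < hi t" if "t \<ge> t0" for t
  proof -
    let ?k = "t div m" and ?j = "t mod m"
    have "\<beta> * \<gamma> * 2 ^ ?k \<le> \<beta> * ((\<mu> - 1) * ej ?j - real (Dn ?j)) * 2 ^ ?k"
      using \<gamma>_le[of ?j] m \<beta> by (intro mult_right_mono mult_left_mono) auto
    then have "2 ^ ?k * real (Dn ?j) * \<beta> + C1 < (\<mu> - 1) * hi t"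
      using k0[of ?k] level[OF that] unfolding hi_def by (simp add: algebra_simps)
    then show ?thesis unfolding lo_Suc using mu by (simp add: divide_less_eq mult.commute)
  qed
  have unbounded: "\<exists>u > t0. x \<le> lo u" for x
  proof -
    define n where "n = nat \<lceil>((\<mu> - 1) * x - C1) / \<beta>\<rceil> + t0 + 1"
    have "((\<mu> - 1) * x - C1) / \<beta> \<le> real n" unfolding n_def by linarith
    also have "\<dots> \<le> 2 ^ n" using less_exp[of n] by (metis of_nat_le_iff of_nat_numeral of_nat_power less_imp_le)
    also have "\<dots> \<le> 2 ^ n * real (Dj 0)" using Dpos by simp
    finally have "x \<le> lo (m * n)" unfolding lo_def using m mu \<beta> by (simp add: field_simps)
    moreover have "m * n > t0"
    proof -
      have "n > t0" unfolding n_def by simp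
      moreover have "n \<le> m * n" using mult_le_mono1[of 1 m n] m by simp
      ultimately show ?thesis by linarith
    qed
    ultimately show ?thesis by blast
  qed
  show ?thesis
  proof (intro exI[of _ "lo t0"] allI impI)
    fix x assume x: "x > lo t0"
    obtain u where "u > t0" "x \<le> lo u" using unbounded by blast
    then obtain t where "t \<ge> t0" "lo t < x" "x < hi t"
      using covering_index[of t0 lo hi, OF overlap _ _ x] by blast
    then show "\<exists>k \<ge> kd. \<exists>j < m. (2 ^ k * real (Dj j) * \<beta> + C1) / (\<mu> - 1) < x
                                 \<and> x < 2 ^ k * ej j * \<beta> - real k * ln 3 - C2"
      using level m unfolding lo_def hi_def by (intro exI[of _ "t div m"]) (auto intro!: exI[of _ "t mod m"])
  qed
qed

lemma scaled_int_vanishes_in_window: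
  fixes b :: int and q K H \<mu> E e y :: real and k D :: nat
  defines "\<beta> \<equiv> ln (real_of_int b)"
  assumes b: "b \<ge> 2" and y: "scaled_int b (2 ^ k * D) y"
    and q: "q > 0" and K: "K > 0" and H: "H > 0" and mu: "\<mu> > 1"
    and bound: "\<bar>y\<bar> \<le> q * 3 ^ k * K * exp (- (2 ^ k * (e + real D)) * \<beta>) + H * E"
    and E: "E < 2 * exp ((1 - \<mu>) * ln q)"
    and lower: "(2 ^ k * real D * \<beta> + ln (4 * H)) / (\<mu> - 1) < ln q"
    and upper: "ln q < 2 ^ k * e * \<beta> - real k * ln 3 - ln (2 * K)"
  shows "y = 0"
proof (rule scaled_int_imp_zero[OF _ y])
  let ?s = "exp (2 ^ k * real D * \<beta>)"
  have scale: "real_of_int b ^ (2 ^ k * D) = ?s"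
    using b exp_of_nat_mult[of "2 ^ k * D" \<beta>] unfolding \<beta>_def by (simp add: mult.commute)
  have "?s * (q * 3 ^ k * K * exp (- (2 ^ k * (e + real D)) * \<beta>))
      = exp (ln q + real k * ln 3 + ln K - 2 ^ k * e * \<beta>)"
    using q K by (simp add: exp_add exp_diff exp_of_nat_mult exp_minus field_simps)
  also have "\<dots> < exp (- ln 2)" using upper K by (simp add: ln_mult)
  finally have small1: "?s * (q * 3 ^ k * K * exp (- (2 ^ k * (e + real D)) * \<beta>)) < 1/2"
    by (simp add: exp_minus)
  have "?s * (H * E) \<le> ?s * (H * (2 * exp ((1 - \<mu>) * ln q)))"
    using E H by (intro mult_left_mono) auto
  also have "\<dots> = exp (2 ^ k * real D * \<beta> + ln 2 + ln H + (1 - \<mu>) * ln q)"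
    using H by (simp add: exp_add)
  also have "\<dots> < exp (- ln 2)"
    using lower mu H ln_realpow[of 2 2] by (simp add: divide_less_eq ln_mult algebra_simps)
  finally have small2: "?s * (H * E) < 1/2"
    by (simp add: exp_minus)
  have "\<bar>real_of_int b ^ (2 ^ k * D) * y\<bar> = ?s * \<bar>y\<bar>"
    unfolding scale by (simp add: abs_mult)
  also have "\<dots> \<le> ?s * (q * 3 ^ k * K * exp (- (2 ^ k * (e + real D)) * \<beta>) + H * E)"
    using bound by (intro mult_left_mono) auto
  also have "\<dots> < 1" using small1 small2 by (simp add: distrib_left)
  finally show "\<bar>real_of_int b ^ (2 ^ k * D) * y\<bar> < 1" .
qed (use b in simp)

lemma approx_denominators_bounded_by_forms:
  fixes \<alpha>1 \<alpha>2 \<mu> K H :: real and b :: int and m kd :: nat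
    and Dj Dn :: "nat \<Rightarrow> nat" and ej :: "nat \<Rightarrow> real"
    and F :: "nat \<Rightarrow> nat \<Rightarrow> nat \<Rightarrow> int \<Rightarrow> int \<Rightarrow> int \<Rightarrow> real"
  assumes b: "b \<ge> 2" and m: "m > 0" and mu: "\<mu> > 1" and K: "K > 0" and H: "H > 0"
    and F_int: "\<And>k j i q p1 p2. j < m \<Longrightarrow> i < 3 \<Longrightarrow> scaled_int b (2 ^ k * Dj j) (F k j i q p1 p2)"
    and F_indep: "\<And>k j q p1 p2. j < m \<Longrightarrow> k \<ge> kd \<Longrightarrow> (\<And>i. i < 3 \<Longrightarrow> F k j i q p1 p2 = 0) \<Longrightarrow> q = 0"
    and F_bound: "\<And>k j i q p1 p2. j < m \<Longrightarrow> i < 3 \<Longrightarrow> q \<ge> 1 \<Longrightarrow>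
        \<bar>F k j i q p1 p2\<bar> \<le> of_int q * 3 ^ k * K * exp (- (2 ^ k * (ej j + real (Dj j))) * ln (real_of_int b))
           + H * (\<bar>of_int q * \<alpha>1 - of_int p1\<bar> + \<bar>of_int q * \<alpha>2 - of_int p2\<bar>)"
    and gap: "\<And>j. j < m \<Longrightarrow> (\<mu> - 1) * ej j > real (Dn j)"
    and Dpos: "Dj 0 \<ge> 1"
    and Dnext: "\<And>j. j + 1 < m \<Longrightarrow> Dn j = Dj (j + 1)"
    and Dlast: "Dn (m - 1) = 2 * Dj 0"
  shows "approx_denominators_bounded \<alpha>1 \<alpha>2 \<mu>"
proof -
  have "ln (real_of_int b) > 0" using b by simp
  from exists_window[OF m mu this gap Dpos Dnext Dlast, of kd "ln (4 * H)" "ln (2 * K)"]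
  obtain x0 where window: "\<And>x. x > x0 \<Longrightarrow> \<exists>k \<ge> kd. \<exists>j < m.
      (2 ^ k * real (Dj j) * ln (real_of_int b) + ln (4 * H)) / (\<mu> - 1) < x
      \<and> x < 2 ^ k * ej j * ln (real_of_int b) - real k * ln 3 - ln (2 * K)"
    by blast
  show ?thesis unfolding approx_denominators_bounded_def
  proof (intro exI[of _ "exp x0"] allI impI)
    fix q p1 p2 :: int
    assume q: "q \<ge> 1" and c1: "\<bar>\<alpha>1 - of_int p1 / of_int q\<bar> < of_int q powr (- \<mu>)"
      and c2: "\<bar>\<alpha>2 - of_int p2 / of_int q\<bar> < of_int q powr (- \<mu>)"
    show "real_of_int q \<le> exp x0"
    proof (rule ccontr)
      assume "\<not> real_of_int q \<le> exp x0"
      then have "exp x0 < exp (ln (real_of_int q))" using q by simp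
      then have "ln (real_of_int q) > x0" by simp
      then obtain k j where k: "k \<ge> kd" and j: "j < m"
        and lower: "(2 ^ k * real (Dj j) * ln (real_of_int b) + ln (4 * H)) / (\<mu> - 1) < ln (real_of_int q)"
        and upper: "ln (real_of_int q) < 2 ^ k * ej j * ln (real_of_int b) - real k * ln 3 - ln (2 * K)"
        using window by blast
      have "\<bar>of_int q * \<alpha>1 - of_int p1\<bar> + \<bar>of_int q * \<alpha>2 - of_int p2\<bar> < 2 * exp ((1 - \<mu>) * ln (real_of_int q))"
        using abs_mult_sub_lt_exp[OF q c1] abs_mult_sub_lt_exp[OF q c2] by simp
      then have "F k j i q p1 p2 = 0" if "i < 3" for i
        using scaled_int_vanishes_in_window[OF b F_int[OF j that] _ K H mu F_bound[OF j that q] _ lower upper] q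
        by simp
      then have "q = 0" by (rule F_indep[OF j k])
      then show False using q by simp
    qed
  qed
qed

section \<open>Certificates\<close>

definition stern_table :: "int list" where
  "stern_table = [1, 1, 2, 1, 3, 2, 3, 1, 4, 3, 5, 2, 5, 3, 4, 1, 5, 4, 7, 3, 8, 5, 7, 2, 7, 5, 8, 3, 7, 4, 5, 1, 6, 5, 9, 4, 11, 7, 10, 3, 11, 8, 13, 5, 12, 7, 9, 2, 9, 7, 12, 5, 13, 8, 11, 3, 10, 7, 11, 4, 9, 5, 6, 1, 7, 6, 11, 5, 14, 9, 13, 4, 15, 11, 18, 7, 17, 10, 13, 3, 14, 11, 19, 8, 21, 13, 18, 5, 17, 12, 19, 7, 16, 9, 11, 2, 11, 9, 16, 7, 19, 12, 17, 5, 18, 13, 21, 8, 19, 11, 14, 3, 13, 10, 17, 7, 18, 11, 15, 4, 13, 9, 14, 5, 11, 6, 7, 1, 8, 7, 13, 6, 17, 11, 16, 5, 19, 14, 23, 9]"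

definition twisted_stern_table :: "int list" where
  "twisted_stern_table = [1, (-1), 0, 1, 1, 0, (-1), (-1), (-2), (-1), (-1), 0, 1, 1, 2, 1, 3, 2, 3, 1, 2, 1, 1, 0, (-1), (-1), (-2), (-1), (-3), (-2), (-3), (-1), (-4), (-3), (-5), (-2), (-5), (-3), (-4), (-1), (-3), (-2), (-3), (-1), (-2), (-1), (-1), 0, 1, 1, 2, 1, 3, 2, 3, 1, 4, 3, 5, 2, 5, 3, 4, 1, 5, 4, 7, 3, 8, 5, 7, 2, 7, 5, 8, 3, 7, 4, 5, 1, 4, 3, 5, 2, 5, 3, 4, 1, 3, 2, 3, 1, 2, 1, 1, 0, (-1), (-1), (-2), (-1), (-3), (-2), (-3), (-1), (-4), (-3), (-5), (-2), (-5), (-3), (-4), (-1), (-5), (-4), (-7), (-3), (-8), (-5), (-7), (-2), (-7), (-5), (-8), (-3), (-7), (-4), (-5), (-1), (-6), (-5), (-9), (-4), (-11), (-7), (-10), (-3), (-11), (-8), (-13), (-5)]"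

lemma stern_table_eq: "stern_table = map (\<lambda>n. stern (n + 1)) [0..<140]"
  unfolding stern_table_def by code_simp

lemma twisted_stern_table_eq: "twisted_stern_table = map (\<lambda>n. twisted_stern (n + 1)) [0..<140]"
  unfolding twisted_stern_table_def by code_simp

definition list_dot :: "int list \<Rightarrow> int list \<Rightarrow> int" where
  "list_dot xs ys = sum_list (map (\<lambda>(x, y). x * y) (zip xs ys))"

lemma list_dot_rev_take:
  assumes n: "n < length ys"
  shows "list_dot xs (rev (take (Suc n) ys)) = (\<Sum>i<length xs. if i \<le> n then xs ! i * ys ! (n - i) else 0)"
proof -
  have "list_dot xs (rev (take (Suc n) ys)) = (\<Sum>i<min (length xs) (Suc n). xs ! i * ys ! (n - i))"
    unfolding list_dot_def using n by (simp add: sum_list_sum_nth atLeast0LessThan rev_nth)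
  also have "\<dots> = (\<Sum>i\<in>{i \<in> {..<length xs}. i \<le> n}. xs ! i * ys ! (n - i))"
    by (intro sum.cong) auto
  also have "\<dots> = (\<Sum>i<length xs. if i \<le> n then xs ! i * ys ! (n - i) else 0)"
    by (rule sum.inter_filter) simp
  finally show ?thesis .
qed

definition form_coeff_table :: "int list \<Rightarrow> int list \<Rightarrow> int list \<Rightarrow> nat \<Rightarrow> int" where
  "form_coeff_table ps qs rs n = (if n < length ps then ps ! n else 0)
     + list_dot qs (rev (take (Suc n) stern_table)) + list_dot rs (rev (take (Suc n) twisted_stern_table))"

lemma form_coeff_table_eq:
  assumes "n < 140" shows "form_coeff_table ps qs rs n = form_coeff ps qs rs n"
proof -
  have tables: "stern_table ! (n - i) = stern (n - i + 1)"
    "twisted_stern_table ! (n - i) = twisted_stern (n - i + 1)" for i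
    unfolding stern_table_eq twisted_stern_table_eq by (subst nth_map_upt; use assms in simp)+
  have len: "n < length stern_table" "n < length twisted_stern_table"
    using assms by (simp_all add: stern_table_eq twisted_stern_table_eq)
  show ?thesis
    unfolding form_coeff_table_def form_coeff_def list_dot_rev_take[OF len(1)]
      list_dot_rev_take[OF len(2)] tables ..
qed

definition const_coeff :: "int list \<Rightarrow> int" where
  "const_coeff xs = (case xs of [] \<Rightarrow> 0 | x # _ \<Rightarrow> x)"

lemma peval_0: "peval xs 0 = of_int (const_coeff xs)"
  by (cases xs) (simp_all add: const_coeff_def)

type_synonym form = "int list \<times> int list \<times> int list"
type_synonym certificate = "nat \<times> form \<times> form \<times> form"

text \<open>The three coefficient polynomials of a form of degree \<open>D\<close> have \<open>(D - 1) + (D + 1) + D\<close>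
  coefficients, so vanishing of the first \<open>3D - 3\<close> coefficients of the form leaves a
  three-dimensional space of forms, from which a certificate picks a basis.\<close>

definition valid_form :: "nat \<Rightarrow> form \<Rightarrow> bool" where
  "valid_form D f = (case f of (ps, qs, rs) \<Rightarrow>
      length ps \<le> D - 1 \<and> length qs \<le> D + 1 \<and> length rs \<le> D
      \<and> list_all (\<lambda>n. form_coeff_table ps qs rs n = 0) [0..<3 * D - 3])"

definition limit_det :: "nat \<Rightarrow> form \<Rightarrow> form \<Rightarrow> form \<Rightarrow> int" where
  "limit_det N f0 f1 f2 = (case f0 of (p0, q0, r0) \<Rightarrow> case f1 of (p1, q1, r1) \<Rightarrow> case f2 of (p2, q2, r2) \<Rightarrow>
      det3 (form_coeff_table p0 q0 r0 N) (const_coeff q0) (const_coeff r0)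
           (form_coeff_table p1 q1 r1 N) (const_coeff q1) (const_coeff r1)
           (form_coeff_table p2 q2 r2 N) (const_coeff q2) (const_coeff r2))"

definition valid_certificate :: "certificate \<Rightarrow> bool" where
  "valid_certificate c = (case c of (D, f0, f1, f2) \<Rightarrow>
      2 \<le> D \<and> 3 * D \<le> 139 \<and> valid_form D f0 \<and> valid_form D f1 \<and> valid_form D f2
      \<and> limit_det (3 * D - 3) f0 f1 f2 \<noteq> 0)"

lemma valid_form_imp:
  assumes "valid_form D (ps, qs, rs)" "3 * D \<le> 139"
  shows "length ps \<le> D - 1" "length qs \<le> D + 1" "length rs \<le> D"
    and "\<And>n. n < 3 * D - 3 \<Longrightarrow> form_coeff ps qs rs n = 0"
  using assms form_coeff_table_eq[of _ ps qs rs] by (auto simp: valid_form_def list_all_iff)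

lemma limit_det_imp:
  assumes "3 * D \<le> 139" "limit_det (3 * D - 3) (p0, q0, r0) (p1, q1, r1) (p2, q2, r2) \<noteq> 0"
  shows "det3 (of_int (form_coeff p0 q0 r0 (3 * D - 3))) (peval q0 0) (peval r0 0)
              (of_int (form_coeff p1 q1 r1 (3 * D - 3))) (peval q1 0) (peval r1 0)
              (of_int (form_coeff p2 q2 r2 (3 * D - 3))) (peval q2 0) (peval r2 0) \<noteq> (0::real)"
  using assms unfolding peval_0 det3_of_int limit_det_def by (simp add: form_coeff_table_eq)

text \<open>With N = 3D - 3 and e = (1 - \<lambda>) N - D, the inequality (\<mu> - 1) e > D' is needed for every
  \<mu> > 80(1 - \<lambda>)/(50 - 77\<lambda>), that is (30 - 3\<lambda>) e \<ge> (50 - 77\<lambda>) D'. This is a quadratic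
  inequality A \<lambda>^2 + B \<lambda> + C \<ge> 0, guaranteed by a negative discriminant.\<close>

definition degree_step_ok :: "nat \<Rightarrow> nat \<Rightarrow> bool" where
  "degree_step_ok D D' = (let N = 3 * int D - 3; A = 3 * N; B = 77 * int D' - 33 * N + 3 * int D;
      C = 30 * (N - int D) - 50 * int D' in 0 < A \<and> B * B < 4 * A * C)"

lemma quadratic_nonneg:
  fixes A B C x :: real assumes "A > 0" "B * B < 4 * A * C"
  shows "A * x^2 + B * x + C \<ge> 0"
proof -
  have "4 * A * (A * x^2 + B * x + C) = (2 * A * x + B)^2 + (4 * A * C - B * B)"
    by (simp add: power2_eq_square algebra_simps)
  also have "\<dots> \<ge> 0" using assms by simp
  finally show ?thesis using assms(1) by (simp add: zero_le_mult_iff)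
qed

lemma degree_step_gap:
  fixes lam \<mu> :: real
  assumes step: "degree_step_ok D D'" and D: "D \<ge> 1" and D': "D' \<ge> 1"
    and lam: "0 \<le> lam" "lam < 50/77" and mu: "\<mu> > 80 * (1 - lam) / (50 - 77 * lam)"
  shows "(\<mu> - 1) * ((1 - lam) * real (3 * D - 3) - real D) > real D'"
proof -
  define N where "N = 3 * int D - 3"
  define e where "e = (1 - lam) * real_of_int N - real D"
  have N: "real (3 * D - 3) = real_of_int N" unfolding N_def using D by (simp add: of_nat_diff)
  let ?A = "3 * N" and ?B = "77 * int D' - 33 * N + 3 * int D" and ?C = "30 * (N - int D) - 50 * int D'"
  have "real_of_int 0 < real_of_int ?A" "real_of_int (?B * ?B) < real_of_int (4 * ?A * ?C)"
    using step unfolding degree_step_ok_def Let_def N_def of_int_less_iff by simp_all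
  then have "real_of_int ?A > 0" "real_of_int ?B * real_of_int ?B < 4 * real_of_int ?A * real_of_int ?C"
    by (simp_all only: of_int_mult of_int_numeral of_int_0)
  then have "real_of_int ?A * lam^2 + real_of_int ?B * lam + real_of_int ?C \<ge> 0"
    by (rule quadratic_nonneg)
  then have quad: "(30 - 3 * lam) * e \<ge> real D' * (50 - 77 * lam)"
    unfolding e_def by (simp add: power2_eq_square algebra_simps)
  have den: "50 - 77 * lam > 0" and num: "30 - 3 * lam > 0" using lam by simp_all
  have "real D' * (50 - 77 * lam) > 0" using D' den by simp
  then have "(30 - 3 * lam) * e > 0" using quad by linarith
  then have e: "e > 0" using num by (simp add: zero_less_mult_iff)
  have "\<mu> - 1 > (30 - 3 * lam) / (50 - 77 * lam)"
    using mu den by (simp add: field_simps)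
  then have "(\<mu> - 1) * e > (30 - 3 * lam) / (50 - 77 * lam) * e"
    using e by (intro mult_strict_right_mono)
  moreover have "(30 - 3 * lam) / (50 - 77 * lam) * e \<ge> real D'"
    using quad den by (simp add: field_simps)
  ultimately show ?thesis unfolding N e_def by linarith
qed

definition cert_degree :: "certificate list \<Rightarrow> nat \<Rightarrow> nat" where
  "cert_degree cs j = fst (cs ! j)"

definition next_degree :: "certificate list \<Rightarrow> nat \<Rightarrow> nat" where
  "next_degree cs j = (if Suc j < length cs then cert_degree cs (Suc j) else 2 * cert_degree cs 0)"

definition cert_form :: "certificate list \<Rightarrow> nat \<Rightarrow> nat \<Rightarrow> form" where
  "cert_form cs j i = (case cs ! j of (D, f0, f1, f2) \<Rightarrow> if i = 0 then f0 else if i = 1 then f1 else f2)"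

lemma cert_form_valid:
  assumes "valid_certificate (cs ! j)" "i < 3" "cert_form cs j i = (ps, qs, rs)"
  shows "2 \<le> cert_degree cs j" "length ps \<le> cert_degree cs j - 1" "length qs \<le> cert_degree cs j + 1"
    "length rs \<le> cert_degree cs j" "\<And>n. n < 3 * cert_degree cs j - 3 \<Longrightarrow> form_coeff ps qs rs n = 0"
proof -
  obtain D f0 f1 f2 where c: "cs ! j = (D, f0, f1, f2)" by (metis prod_cases4)
  then have "valid_form D (ps, qs, rs)" "2 \<le> D" "3 * D \<le> 139" "cert_degree cs j = D"
    using assms unfolding valid_certificate_def cert_form_def cert_degree_def by (auto split: if_splits)
  then show "2 \<le> cert_degree cs j" "length ps \<le> cert_degree cs j - 1" "length qs \<le> cert_degree cs j + 1"
    "length rs \<le> cert_degree cs j" "\<And>n. n < 3 * cert_degree cs j - 3 \<Longrightarrow> form_coeff ps qs rs n = 0"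
    using valid_form_imp by auto
qed

definition cert_lift_form :: "certificate list \<Rightarrow> real \<Rightarrow> nat \<Rightarrow> nat \<Rightarrow> nat \<Rightarrow> int \<Rightarrow> int \<Rightarrow> int \<Rightarrow> real" where
  "cert_lift_form cs z k j i q p1 p2 =
     (case cert_form cs j i of (ps, qs, rs) \<Rightarrow> lift_form k z ps qs rs q p1 p2)"

definition cert_lead_bound :: "certificate list \<Rightarrow> real \<Rightarrow> nat \<Rightarrow> nat \<Rightarrow> real" where
  "cert_lead_bound cs z j i = (case cert_form cs j i of (ps, qs, rs) \<Rightarrow>
     \<bar>real_of_int (form_coeff ps qs rs (3 * cert_degree cs j - 3))\<bar>
     + form_tail_bound ps qs rs (3 * cert_degree cs j - 3) \<bar>z\<bar>)"

definition cert_height :: "certificate list \<Rightarrow> nat \<Rightarrow> nat \<Rightarrow> real" where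
  "cert_height cs j i = (case cert_form cs j i of (ps, qs, rs) \<Rightarrow> form_height ps qs rs)"

lemma scaled_int_cert_lift_form:
  assumes "valid_certificate (cs ! j)" "i < 3" "b \<noteq> 0"
  shows "scaled_int b (2 ^ k * cert_degree cs j) (cert_lift_form cs (of_int a / of_int b) k j i q p1 p2)"
proof -
  obtain ps qs rs where f: "cert_form cs j i = (ps, qs, rs)" by (metis prod_cases3)
  show ?thesis
    unfolding cert_lift_form_def f using cert_form_valid(1-4)[OF assms(1,2) f] assms(3)
    by (simp add: scaled_int_lift_form)
qed

lemma abs_cert_lift_form_le:
  assumes "valid_certificate (cs ! j)" "i < 3" "\<bar>z\<bar> < 1" "q \<ge> 0"
  shows "\<bar>cert_lift_form cs z k j i q p1 p2\<bar>
    \<le> of_int q * 3 ^ k * (cert_lead_bound cs z j i * \<bar>z\<bar> ^ (2 ^ k * (3 * cert_degree cs j - 3)))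
      + cert_height cs j i * (\<bar>of_int q * stern_A z - of_int p1\<bar> + \<bar>of_int q * stern_B z - of_int p2\<bar>)"
proof -
  obtain ps qs rs where f: "cert_form cs j i = (ps, qs, rs)" by (metis prod_cases3)
  show ?thesis
    unfolding cert_lift_form_def cert_lead_bound_def cert_height_def f
    using abs_lift_form_le[OF assms(3) cert_form_valid(5)[OF assms(1,2) f] assms(4)] by simp
qed

lemma cert_lift_forms_independent:
  assumes valid: "valid_certificate (cs ! j)" and z: "\<bar>z\<bar> < 1" "z \<noteq> 0"
  shows "eventually (\<lambda>k. \<forall>q p1 p2. (\<forall>i<3. cert_lift_form cs z k j i q p1 p2 = 0) \<longrightarrow> q = 0) sequentially"
proof -
  obtain D p0 q0 r0 p1 q1 r1 p2 q2 r2 where c: "cs ! j = (D, (p0, q0, r0), (p1, q1, r1), (p2, q2, r2))"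
    by (metis prod_cases4 prod_cases3)
  have forms: "cert_form cs j 0 = (p0, q0, r0)" "cert_form cs j 1 = (p1, q1, r1)"
    "cert_form cs j 2 = (p2, q2, r2)"
    by (simp_all add: cert_form_def c)
  have D: "cert_degree cs j = D" by (simp add: cert_degree_def c)
  have lim: "3 * D \<le> 139" "limit_det (3 * D - 3) (p0, q0, r0) (p1, q1, r1) (p2, q2, r2) \<noteq> 0"
    using valid unfolding valid_certificate_def c by auto
  have "eventually (\<lambda>k. det3 (peval p0 (z ^ 2 ^ k)) (peval q0 (z ^ 2 ^ k)) (peval r0 (z ^ 2 ^ k))
                             (peval p1 (z ^ 2 ^ k)) (peval q1 (z ^ 2 ^ k)) (peval r1 (z ^ 2 ^ k))
                             (peval p2 (z ^ 2 ^ k)) (peval q2 (z ^ 2 ^ k)) (peval r2 (z ^ 2 ^ k)) \<noteq> 0)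
          sequentially"
    using cert_form_valid(5)[OF valid _ forms(1)] cert_form_valid(5)[OF valid _ forms(2)]
      cert_form_valid(5)[OF valid _ forms(3)] D
    by (intro det3_peval_eventually_nonzero[OF z _ _ _ limit_det_imp[OF lim]]) auto
  then show ?thesis
  proof eventually_elim
    case (elim k)
    show ?case
    proof (intro allI impI)
      fix q pp1 pp2 :: int
      assume "\<forall>i<3. cert_lift_form cs z k j i q pp1 pp2 = 0"
      from this[rule_format, of 0] this[rule_format, of 1] this[rule_format, of 2]
      show "q = 0" using lift_forms_independent[OF elim] forms by (simp add: cert_lift_form_def)
    qed
  qed
qed

lemma next_degree_ge_1:
  assumes valid: "\<forall>j<length cs. valid_certificate (cs ! j)" and j: "j < length cs"
  shows "next_degree cs j \<ge> 1"
proof -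
  have "cert_degree cs j' \<ge> 2" if "j' < length cs" for j'
    using cert_form_valid(1)[of cs j' 0] valid that by (metis prod_cases3 zero_less_numeral)
  then show ?thesis using j unfolding next_degree_def by fastforce
qed

lemma finite_pos_upper_bound:
  fixes f :: "'a \<Rightarrow> real"
  assumes "finite S" shows "\<exists>K > 0. \<forall>x\<in>S. f x \<le> K"
proof (intro exI conjI ballI)
  show "1 + (\<Sum>x\<in>S. \<bar>f x\<bar>) > 0" by (simp add: add_pos_nonneg sum_nonneg)
  show "f x \<le> 1 + (\<Sum>x\<in>S. \<bar>f x\<bar>)" if "x \<in> S" for x
    using member_le_sum[of x S "\<lambda>x. \<bar>f x\<bar>"] that assms by force
qed


lemma abs_ratio_power:
  fixes a b :: int and lam :: real
  assumes b: "b \<ge> 2" and a: "a \<noteq> 0" and lam: "ln \<bar>real_of_int a\<bar> = lam * ln (real_of_int b)"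
  shows "\<bar>real_of_int a / real_of_int b\<bar> ^ n = exp (- (real n * (1 - lam)) * ln (real_of_int b))"
proof -
  have "\<bar>real_of_int a / real_of_int b\<bar> = exp (ln \<bar>real_of_int a\<bar> - ln (real_of_int b))"
    using a b by (simp add: exp_diff abs_divide)
  also have "\<dots> = exp (- (1 - lam) * ln (real_of_int b))"
    unfolding lam by (simp add: algebra_simps)
  finally show ?thesis by (simp add: exp_of_nat_mult[symmetric] algebra_simps)
qed

lemma stern_approx_denominators_bounded:
  fixes cs :: "certificate list" and a b :: int and lam \<mu> :: real
  assumes valid: "\<forall>j<length cs. valid_certificate (cs ! j)" and nonempty: "cs \<noteq> []"
    and steps: "\<forall>j<length cs. degree_step_ok (cert_degree cs j) (next_degree cs j)"
    and b: "b \<ge> 2" and a: "a \<noteq> 0"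
    and lam: "ln \<bar>real_of_int a\<bar> = lam * ln (real_of_int b)" "0 \<le> lam" "lam < 50/77"
    and mu: "\<mu> > 80 * (1 - lam) / (50 - 77 * lam)"
  shows "approx_denominators_bounded (stern_A (of_int a / of_int b)) (stern_B (of_int a / of_int b)) \<mu>"
proof -
  define z where "z = real_of_int a / real_of_int b"
  define m where "m = length cs"
  have zpow: "\<bar>z\<bar> ^ n = exp (- (real n * (1 - lam)) * ln (real_of_int b))" for n
    unfolding z_def by (rule abs_ratio_power[OF b a lam(1)])
  have "(1 - lam) * ln (real_of_int b) > 0" using lam b by simp
  then have z1: "\<bar>z\<bar> < 1" using zpow[of 1] by (simp add: algebra_simps)
  have z0: "z \<noteq> 0" using a b by (simp add: z_def)
  obtain K where K: "K > 0" "\<And>j i. j < m \<Longrightarrow> i < 3 \<Longrightarrow> cert_lead_bound cs z j i \<le> K"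
    using finite_pos_upper_bound[of "{..<m} \<times> {..<3::nat}" "\<lambda>(j, i). cert_lead_bound cs z j i"] by auto
  obtain H where H: "H > 0" "\<And>j i. j < m \<Longrightarrow> i < 3 \<Longrightarrow> cert_height cs j i \<le> H"
    using finite_pos_upper_bound[of "{..<m} \<times> {..<3::nat}" "\<lambda>(j, i). cert_height cs j i"] by auto
  have "eventually (\<lambda>k. \<forall>j\<in>{..<m}. \<forall>q p1 p2. (\<forall>i<3. cert_lift_form cs z k j i q p1 p2 = 0) \<longrightarrow> q = 0)
          sequentially"
    using valid cert_lift_forms_independent[OF _ z1 z0] unfolding m_def
    by (intro eventually_ball_finite ballI) auto
  then obtain kd where kd: "\<And>k j q p1 p2. k \<ge> kd \<Longrightarrow> j < m
      \<Longrightarrow> (\<forall>i<3. cert_lift_form cs z k j i q p1 p2 = 0) \<Longrightarrow> q = 0"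
    unfolding eventually_sequentially by blast
  \<comment> \<open>|z|^(2^k N) = b^(-2^k (1 - \<lambda>) N) against denominators b^(2^k D), N = 3D - 3:
    the exponent that counts is (1 - \<lambda>) N - D.\<close>
  show ?thesis
    unfolding z_def[symmetric]
  proof (rule approx_denominators_bounded_by_forms[where F = "cert_lift_form cs z" and m = m and kd = kd
        and K = K and H = H and Dj = "cert_degree cs" and Dn = "next_degree cs"
        and ej = "\<lambda>j. (1 - lam) * real (3 * cert_degree cs j - 3) - real (cert_degree cs j)",
        OF b _ _ K(1) H(1)])
    show "m > 0" using nonempty by (simp add: m_def)
    have "80 * (1 - lam) / (50 - 77 * lam) \<ge> 1" using lam by (simp add: field_simps)
    then show "\<mu> > 1" using mu by linarith
  next
    fix k j i :: nat and q p1 p2 :: int assume j: "j < m" and i: "i < 3"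
    have valid_j: "valid_certificate (cs ! j)" using valid j by (simp add: m_def)
    show "scaled_int b (2 ^ k * cert_degree cs j) (cert_lift_form cs z k j i q p1 p2)"
      unfolding z_def using b by (intro scaled_int_cert_lift_form[OF valid_j i]) simp
    assume q: "q \<ge> 1"
    define N where "N = 3 * cert_degree cs j - 3"
    let ?E = "\<bar>of_int q * stern_A z - of_int p1\<bar> + \<bar>of_int q * stern_B z - of_int p2\<bar>"
    have "\<bar>cert_lift_form cs z k j i q p1 p2\<bar>
        \<le> of_int q * 3 ^ k * (cert_lead_bound cs z j i * \<bar>z\<bar> ^ (2 ^ k * N)) + cert_height cs j i * ?E"
      using abs_cert_lift_form_le[OF valid_j i z1] q by (simp add: N_def)
    also have "\<dots> \<le> of_int q * 3 ^ k * (K * \<bar>z\<bar> ^ (2 ^ k * N)) + H * ?E"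
      using K(2)[OF j i] H(2)[OF j i] q by (intro add_mono mult_left_mono mult_right_mono) auto
    also have "\<bar>z\<bar> ^ (2 ^ k * N) = exp (- (2 ^ k * ((1 - lam) * real N - real (cert_degree cs j)
        + real (cert_degree cs j))) * ln (real_of_int b))"
      unfolding zpow by (simp add: algebra_simps)
    finally show "\<bar>cert_lift_form cs z k j i q p1 p2\<bar> \<le> of_int q * 3 ^ k * K * exp (- (2 ^ k *
        ((1 - lam) * real N - real (cert_degree cs j) + real (cert_degree cs j))) * ln (real_of_int b))
        + H * ?E"
      by (simp add: mult.assoc N_def)
  next
    fix k j :: nat and q p1 p2 :: int
    assume "j < m" "kd \<le> k" "\<And>i. i < 3 \<Longrightarrow> cert_lift_form cs z k j i q p1 p2 = 0"
    then show "q = 0" using kd by blast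
  next
    fix j assume j: "j < m"
    then show "(\<mu> - 1) * ((1 - lam) * real (3 * cert_degree cs j - 3) - real (cert_degree cs j))
        > real (next_degree cs j)"
      using degree_step_gap[OF _ _ next_degree_ge_1[OF valid] lam(2,3) mu] steps
        cert_form_valid(1)[of cs j 0] valid
      unfolding m_def by (metis One_nat_def le_trans one_le_numeral prod_cases3 zero_less_numeral)
  next
    show "cert_degree cs 0 \<ge> 1"
      using cert_form_valid(1)[of cs 0 0] valid nonempty by (metis le_trans one_le_numeral prod_cases3
          zero_less_numeral length_greater_0_conv)
    show "next_degree cs j = cert_degree cs (j + 1)" if "j + 1 < m" for j
      using that by (simp add: next_degree_def m_def)
    show "next_degree cs (m - 1) = 2 * cert_degree cs 0"
      using nonempty by (simp add: next_degree_def m_def)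
  qed
qed


definition certificate_25 :: certificate where
  "certificate_25 = (25, ([18016, 2300, 26998, (-7988), 39876, 35486, (-21232), (-17592), 50434, (-34392), 17434, 44794, 27710, 18900, 78948, 5632, (-11632), 52368, 78806, 10880, 115988, 68238, 6372, 2904], [(-16120), 15488, (-5750), (-15026), 27541, (-9383), (-3177), 22044, (-17764), (-16522), 6381, 3861, (-4373), 2926, 5016, (-8646), 20698, (-8690), 1134, 14784, (-29013), 7821, (-1901), (-17732), 21208, 8536], [(-1896), (-3564), (-8060), 7744, 5185, (-15257), 11533, 9328, (-21322), 11132, 5647, (-19811), 16573, 11572, (-14734), 1826, 5578, (-15422), (-376), 19778, (-11021), (-14993), 12981, 0, 0]), ([11924, 25144, 18866, 11510, 14760, 70390, 19426, (-39888), 42182, 28170, (-16066), 57056, 41956, 4566, 43848, 75296, (-52844), 19212, 67174, 39250, 25708, 145974, 29430, 6372], [(-15488), (-632), 15026, (-20776), 9383, 18158, (-22044), 18867, 16522, (-34286), (-3861), 10242, (-2926), (-1447), 8646, (-3630), 8690, 12008, (-14784), 15918, (-7821), (-21192), 17732, (-19633), (-8536), 29744], [3564, (-5460), (-7744), (-316), 15257, (-10072), (-9328), 20861, (-11132), (-10190), 19811, (-14164), (-11572), 28145, (-1826), (-12908), 15422, (-9844), (-19778), 19402, 14993, (-26014), 0, 12981, 0]), ([10070, 134410, 105920, (-93862), 27828, 200782, 243118, (-35184), 282602, 138912, 216602, 115550, (-74390), (-351630), (-309420), 89150, (-464618), (-232770), (-413552), (-419594), (-650732), (-45258), (-13218),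 109656], [(-84164), 30976, 40424, (-30052), 29120, (-18766), (-84240), 44088, 159187, (-33044), (-13200), 7722, (-21727), 5852, 35994, (-17292), 54377, (-17380), (-49656), 29568, (-6102), 15642, 74084, (-35464), (-139318), 17072], [74094, (-7128), (-16120), 15488, 62294, (-30514), (-54820), 18656, (-29663), 22264, 37256, (-39622), (-83683), 23144, 48418, 3652, 102023, (-30844), (-104600), 39556, 107768, (-29986), 0, 0, 51924]))"

definition certificate_27 :: certificate where
  "certificate_27 = (27, ([8586, (-34), 10096, 7164, 13870, (-4822), 6040, 8228, 4008, (-6366), 46394, (-2988), 11058, 11692, (-2130), (-13388), 18496, 22954, (-17486), 6624, 8754, (-12526), (-1748), 25732, (-15282), 5642], [(-6148), 3796, (-5820), 5252, 8062, (-11700), 5496, 286, (-8603), 10400, 4768, (-10595), 1895, 2782, (-2656), 143, 10955, (-7670), 4046, (-949), (-12044), 11648, (-3232), (-884), 7822, (-9828), (-3084), 6994], [(-2438), (-52), 4172, (-1430), 164, 728, 2648, (-6604), 331, 7956, (-8036), 1963, 4959, (-9074), 1504, 7839, (-3763), (-2262), 5774, (-5395), (-3558), 8684, 2368, (-9438), 6948, 0, 0]), ([3744, 8690, 11276, 12956, 19020, 12414, 3108, 19248, 11036, (-11904), 33310, 42468, 9284, 29206, 14266, (-17808), (-11984), 23020, (-12562), (-6696), 14164, (-8614), (-22744), 17128, (-7028), (-15282)], [(-3796), (-2352), (-5252), (-568), 11700, (-3638), (-286), 5782, (-10400), 1797, 10595, (-5827), (-2782), 4677, (-143), (-2513), 7670,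 3285, 949, 3097, (-11648), (-396), 884, (-4116), 9828, (-2006), (-6994), 3910], [52, (-2490), 1430, 2742, (-728), 892, 6604, (-3956), (-7956), 8287, (-1963), (-6073), 9074, (-4115), (-7839), 9343, 2262, (-6025), 5395, 379, (-8684), 5126, 9438, (-7070), 0, 6948, 0]), ([(-1386), 13034, 20140, 9972, 23182, 29378, 32836, 16376, 46848, 13938, 9914, 41544, 54066, 14692, 22290, 1708, (-52172), (-27974), (-8186), (-18432), (-15246), 9530, (-4400), (-13400), 23442, 9122], [(-4240), (-3212), (-5052), (-4444), (-230), 9900, 516, (-242), 7903, (-8800), (-26), 8965, (-2227), (-2354), 4118, (-121), 1865, 6490, 6464, 803, 1996, (-9856), (-5104), 748, (-5906), 8316, 828, (-5918)], [5626, 44, (-3352), 1210, 3068, (-616), 3104, 5588, (-9455), (-6732), 5998, (-1661), (-4107), 7678, (-4034), (-6633), 12359, 1914, (-4084), 4565, (-18), (-7348), 4588, 7986, 0, 0, 6948]))"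

definition certificate_29 :: certificate where
  "certificate_29 = (29, ([1302, (-5178), (-378), 2084, (-2648), (-3108), (-360), (-1636), (-2692), 1950, (-5346), (-6888), 4156, (-552), 5612, 5804, 9442, (-6502), (-794), (-5608), 1772, (-78), (-1424), (-5402), (-5308), (-7064), (-7162), (-866)], [453, 1233, (-412), (-832), (-374), (-794), 360, 1380, (-226), (-100), (-380), (-1520), (-217), 1730, 128, 326, (-434), (-2069), 842, 1220, (-74), 1363, (-464), (-2336), 347, 491, 12, 2136, 860, (-2758)], [(-1755), 1737, 388, (-1616), 488, 110, (-632), 1504, 2110, (-1874), (-72), 408, (-1453), 944, 1088, (-1162), (-948), 489, (-654), 324, 796, (-185), (-368), (-68), (-825), 153, 912, 0, 0]), ([2970, (-2172), (-1686), 2854, 1436, (-2868), 12, (-3368), (-422), 1056, 1398, (-6162), 1802, 2268, 1984, 7936, 14048, 8464, 3506, (-1442), 3442, 2142, 3242, (-1288), 106, (-5614), (-4472), (-7162)], [(-1233), 1686, 832, (-1244), 794, (-1168), (-1380), 1740, 100, (-326), 1520, (-1900), (-1730), 1513, (-326), 454, 2069, (-2503), (-1220), 2062, (-1363), 1289, 2336, (-2800), (-491), 838, (-2136), 2148, 2758, (-1898)], [(-1737), (-18), 1616, (-1228), (-110), 598, (-1504), 872, 1874, 236, (-408), 336, (-944), (-509), 1162, (-74), (-489), (-459), (-324), (-330), 185, 611, 68, (-436), (-153), (-672), 0, 912, 0]), ([(-69942), 25482, (-71718), (-31124), 68936, 63108, (-28392), 83764, (-80444), (-100734), 103554, 81000,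 (-3580), 226296, 276484, 61012, 61262, 93238, (-71350), 231400, (-63452), (-91986), (-148624), (-17254), (-210212), (-20392), 3946, 89138], [59355, (-30825), (-48980), 20800, (-55402), 19850, 58488, (-34500), (-30830), 2500, (-21508), 38000, 65161, (-43250), (-9584), (-8150), (-59374), 51725, 55558, (-30500), 65690, (-34075), (-72304), 58400, 19141, (-12275), 44388, (-53400), (-77132), 68950], [10587, (-43425), (-10612), 40400, (-10376), (-2750), 48632, (-37600), 16562, 46850, (-54744), (-10200), 46813, (-23600), (-26288), 29050, (-56556), (-12225), 72894, (-8100), (-11692), 4625, (-21808), 1700, 17433, (-3825), 0, 0, 33744]))"

definition certificate_32 :: certificate where
  "certificate_32 = (32, ([(-2), 0, (-2), (-2), (-4), (-2), (-2), 0, (-2), (-2), (-4), (-2), (-6), (-4), (-6), (-2), (-8), (-6), (-10), (-4), (-10), (-6), (-8), (-2), (-6), (-4), (-6), (-2), (-4), (-2), (-2)], [1, 0, 0, 0, 0, 0, 0, 0, 0, 0, 0, 0, 0, 0, 0, 0, 0, 0, 0, 0, 0, 0, 0, 0, 0, 0, 0, 0, 0, 0, 0, 0, (-2)], [1, 0, 0, 0, 0, 0, 0, 0, 0, 0, 0, 0, 0, 0, 0, 0, 0, 0, 0, 0, 0, 0, 0, 0, 0, 0, 0, 0, 0, 0, 0, 0]), ([(-1922), 8428, (-19174), 13630, (-2672), (-10532), (-2718), 15230, (-25680), 19580, (-7538), (-7252), (-8674), 26404, (-20938), 6736, 24552, 11364, (-6446), 23506, (-25434), 28050, (-27446), 7804,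 (-23018), 15548, (-34826), 9950, (-27008), 13904, (-12232)], [1922, (-6426), 11307, (-4881), (-6054), 11370, (-10932), (-438), 9417, (-8979), 1329, 7650, (-11676), 4026, 8580, (-12606), 5793, 6813, (-15303), 8490, 7743, (-16668), 15285, 1383, (-15800), 14562, (-1719), (-12843), 17135, (-4437), (-12717), 17154, (-8436)], [0, (-3924), 6525, (-2601), (-7024), 9480, (-2010), (-7470), 12611, (-5721), (-2409), 8130, (-2776), (-5064), 5088, (-24), (-6211), 6525, (-3345), (-3180), 3983, (-948), 201, 747, (-2126), 1524, (-1053), (-471), 2919, (-2883), 2883, 0]), ([(-1922), 16840, (-14542), 994, 21292, 5566, (-2916), 20948, (-12348), (-3358), 24274, 3980, (-9388), 52528, 29930, 31984, 53010, 98130, 41614, 72526, 16842, 44796, 25912, 10306, (-10574), 8348, (-9998), (-9058), (-10520), (-28), 13904], [1922, (-7773), 4881, 6426, (-10935), 2469, 438, (-11370), 8979, 438, (-7650), 8979, (-4026), (-7650), 12606, (-4026), (-6813), 12606, (-8490), (-6813), 16233, (-6078), (-1383), 16668, (-14417), (-2187), 12843, (-14562), 4292, 13647, (-17154), 4437, 8718], [0, (-10989), 2601, 3924, (-9625), 3405, 7470, (-9480), 5141, 10686, (-8130), 5721, 5354, (-9738), 24, 5064, (-6235), (-1584), 3180, (-6525), 803, 3984, (-747), 948, (-1379), (-1551), 471, (-1524), 2448, 2883, 0, 2883]))"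

definition certificate_35 :: certificate where
  "certificate_35 = (35, ([(-79041630), (-6702594), (-53778620), (-64599276), (-101357240), (-87103324), (-106428), 9921786, (-66808696), (-34264888), (-97909136), (-73347190), (-200288674), (-99412874), (-55503108), 24001706, (-98831246), (-161347150), (-5871634), 38819250, (-9245588), (-122125746), 32592878, 81872514, (-66825362), (-250649568), (-155673324), (-13863092), (-148903708), (-138589886), (-39507754), (-908204), (-42122526), (-30706340)], [48320142, (-6201090), (-28097329), 6525820, 14604834, 1560930, (-21884001), 11757690, (-24668511), (-7665000), 29356779, (-6897030), (-29822889), 14138460, (-2253810), (-4097940), 31653129, (-12760440), (-26255829), 16434810, (-8117220), (-530880), 33949479, (-18623850), 16832046, 13283130, (-34658402), 9435650, 32502501, (-21802830), 345320, 8479660, (-119795079), 27187440, 82345614, (-36337980)], [30721488, (-4694970), (-13258215), 6273120, (-22091490), 3807930, (-22057735), 9165310, 33211617, (-14753760), (-2791231), 3788470, 19023825, 7477260, 5223650, (-10105340), (-7165509), 4851420, (-8652493), 4060630, (-22965144), (-5194980), 18838445, 632170, (-11240556), 2153130, (-3602468), 411110, 12455595, (-2594550), (-11505948), 84420, 28278111, 0, 0]), ([(-10896060), (-69651690), (-15695774), (-66324860), (-58436896), (-108973100), (-54143684), (-18437048), 33879426, (-37301176), (-30144408), (-105486076), (-62828150), (-215243194), (-69057514), (-35292428), 48184886, (-108534086), (-61995870), (-13992894), 66949870, 1144372, (-11602746), 31328538, 161343094, (-71131622), (-149015168), (-156495544), 14597368, (-143714608), (-61611446), (-39676594), 45140036,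 (-42122526)], [6201090, 42119052, (-6525820), (-21571509), (-1560930), 16165764, (-11757690), (-10126311), 7665000, (-32333511), 6897030, 22459749, (-14138460), (-15684429), 4097940, (-6351750), 12760440, 18892689, (-16434810), (-9821019), 530880, (-8648100), 18623850, 15325629, (-13283130), 30115176, (-9435650), (-25222752), 21802830, 10699671, (-8479660), 8824980, (-27187440), (-92607639), 36337980, 46007634], [4694970, 26026518, (-6273120), (-6985095), (-3807930), (-18283560), (-9165310), (-12892425), 14753760, 18457857, (-3788470), 997239, (-7477260), 26501085, 10105340, (-4881690), (-4851420), (-2314089), (-4060630), (-4591863), 5194980, (-28160124), (-632170), 19470615, (-2153130), (-9087426), (-411110), (-3191358), 2594550, 9861045, (-84420), (-11421528), 0, 28278111, 0]), ([30474846, (-11067336), (-85750438), (-8379500), (-99435924), (-99021732), (-312517196), (-7780358), (-12976024), (-24578786), (-114354860), (-54326792), (-254662650), (-32102184), (-480646342), (-298605528), (-176635506), 140034138, (-386058220), (-79076688), (-33446188), 145793314, (-398267260), (-234129978), (-316966144), 361976680, (-373165460), (-326238744), (-377718144), (-33191886), (-496110186), (-100309932), (-105340480), 179820244], [(-31573704), 24892947, 91649452, (-26196506), (-16614783), (-6266019), 71285739, (-47198727), (-22569426), 30769500, (-102091551), 27686649, 83763999, (-56755818), 967977, 16450302, (-83031645), 51224052, 69444801, (-65974023), 24505380, 2131104, (-92249850), 74761455, 39888180, (-53322279), 119468708, (-37877395), (-117951162), 87522789, (-6772520), (-34039778), 162156966, (-109138152), (-248148327), 145871034], [1098858, 18846951,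 51202398, (-25182096), (-16351431), (-15286119), 36702847, (-36792173), (-57777966), 59225808, 9454249, (-15208001), 63003621, (-30015858), 14041771, 40565722, (-39507039), (-19474986), 24095623, (-16300529), (-6380766), 20854134, (-66870152), (-2537711), 62897616, (-8643279), 456938, (-1650313), (-47980452), 10415265, 26797458, (-338886), 0, 0, 28278111]))"

definition certificate_39 :: certificate where
  "certificate_39 = (39, ([364500, 141570, 1291978, (-149904), (-501956), 2450804, (-1415892), (-890926), (-5723860), (-6696402), (-3003538), 2777842, 2971056, 1349548, 1777422, (-3208992), (-4362270), (-2329602), (-5940212), (-2929776), (-9905360), (-7294144), (-5150460), 2207780, 1363094, (-249462), (-700604), (-1447180), (-473638), (-2389352), (-5848196), (-2617120), (-8350510), (-10238660), (-10577290), (-3856124), (-5450388), 2045488], [99990, (-456501), (-329578), 203224, 764064, 472233, (-252919), (-195524), 755313, 558228, 380226, (-260439), (-973077), (-622443), 84003, 395700, (-418953), 201678, 205125, (-442488), 188763, 110985, (-238998), 306438, (-261840), (-615558), (-348980), 227048, 1154352, 783942, 125662, (-576544), 16932, 368727, 458380, 219653, (-1950333), (-922470), 232108, 95612], [(-464490), (-249549), (-955428), 598332, 1662726, 273255, 1232853, (-792408), (-1318035), 183114, (-364446), 74277, (-101421), (-472785), (-1131711), 890796, 1692345, 379392, 987747, (-974604), (-280443), 469977, (-55884), (-21558), (-900138), (-649122), (-514696), 830758, 163698, (-18840), 911420, (-654680), (-776070), 122187, (-979134), 357357, 1462917, 0, 0]), ([(-706050), 863598, (-468974), 95314, 372692,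 (-1048466), 1940740, 168924, (-1663528), (-6090088), (-6510272), (-3152092), 1418666, 3916626, 2722992, (-4170), 1352022, (-5121054), (-1034942), (-3991004), (-3172102), (-10845314), (-7470008), (-5107344), (-187720), 2661338, (-282816), (-2362120), 2243110, (-435958), (-1408236), (-4538836), 336010, (-8594884), (-8679434), (-11292004), (-4570042), (-5450388)], [456501, (-356511), (-203224), (-126354), (-472233), 1236297, 195524, (-448443), (-558228), 1313541, 260439, 119787, 622443, (-1595520), (-395700), 479703, (-201678), (-217275), 442488, (-237363), (-110985), 299748, (-306438), 67440, 615558, (-877398), (-227048), (-121932), (-783942), 1938294, 576544, (-450882), (-368727), 385659, (-219653), 678033, 922470, (-2872803), (-95612), 327720], [249549, (-714039), (-598332), (-357096), (-273255), 1935981, 792408, 440445, (-183114), (-1134921), (-74277), (-290169), 472785, (-574206), (-890796), (-240915), (-379392), 2071737, 974604, 13143, (-469977), 189534, 21558, (-77442), 649122, (-1549260), (-830758), 316062, 18840, 144858, 654680, 256740, (-122187), (-653883), (-357357), (-621777), 0, 1462917, 0]), ([26027010, (-15714432), 49825326, 35628358, 10941952, 34004528, 33293422, (-232136), 73710204, 13108904, (-70313632), (-91251470), (-1240600), (-1759504), 21162180, 98723928, (-134423016), 55633818, (-84411642), (-53447132), 9426976, 14115200, (-120183656), (-105255386), 16107024, (-24836926), 60662102, 48480426, (-156242890), 36130174, (-23576800), (-52187550), (-127227910), 40387846, (-138074884), (-90954710), (-112314130), (-56341402)], [(-22454514), 22368549, (-15059574), (-9957976), 19614627, (-23139417), 27997479,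 9580676, 9803007, (-27353172), 31108104, 12761511, (-25465077), 30499707, (-31911570), (-19389300), 27843282, (-9882222), (-11514042), 21681912, (-15101055), (-5438265), 19025487, (-15015462), (-10576512), 30162342, (-27762768), (-11125352), 28285938, (-38413158), 36754794, 28250656, (-3755502), (-18067623), 27766197, (-10762997), (-8300790), 45201030, (-72328167), (-4684988)], [(-3572496), 12227901, 2628, (-29318268), 16541865, (-13389495), 12736053, 38827992, (-11487969), (-8972586), (-8474652), (-3639573), (-12585375), 23166465, 4251744, (-43649004), 32645538, (-18590208), 11579994, 47755596, (-18442467), (-23028873), 18830403, 1056342, (-14409918), 31806978, (-17692128), (-40707142), 30014640, 923160, (-20277630), 32079320, (-14637582), (-5987163), 5552973, (-17510493), 0, 0, 21943755]))"

definition certificate_44 :: certificate where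
  "certificate_44 = (44, ([72174580, (-6737757662), (-11701341182), (-2711248328), 7140543372, (-13158324786), (-13339797426), (-9564106556), (-6858826814), (-21703823716), 11003464534, (-10921429686), (-3944842180), (-1436735806), (-5819398386), 1409248628, 13821176778, 2669492600, (-25009501590), (-1866460738), (-11855421574), (-33547959156), 14163109014, (-24262788662), (-20365715254), (-28726885228), (-19190765238), (-11685533602), 18312010712, (-394205012), (-27062348112), 7334075468, (-11018597956), (-36951693746), (-10004290746), (-14413488696), (-21176572228), (-37438565378), (-17675490258), (-23129021068), 565825512, (-25982844882), (-14581415682)], [2575055661, 4487951040, (-4554791776), 149488200, (-1790308119), 166398800, 3392857170, (-2557604640), (-374184319), (-2965508240), 278952664, 1116253760, 3464872248, 228480160, (-3332101152), 3592319040, (-1856913729), (-1602231880), 4266208186, (-3415888560), (-524199686), 2311394200, (-2816076540), 1196405680, 2286345656, (-1824132040), 130954684, 1371570920, (-3439776301), 1702279840, 2399875692, (-4474069120), (-181959751), (-3705461200), 502224804, 4031507720, 2676326281, (-4335310080), (-16468870), 2640437440, (-2751699383), 5908464000, (-291896232), (-3995958800), (-253321158)], [(-2647230241), (-2972479280), 3645591316, 1858415720, (-1125132683), (-1374159680), 649578802, (-2894839040), 1769757111, 7682800480, (-6088016088), 413908320, 1437399144, (-6738649440), 4474749524, 3613209600, (-3694649855), (-3078667320), 3634890686, (-4191813440), 2033105240, 10280740520, (-8930573776), 169827920, 3509590122, (-7606053240), 4161378484, 5081453880, (-5218947783), (-4059679520), 5618209364, (-3515118720), (-1890266601), 7054662400,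 (-4617122368), (-141377880), 2871771757, (-4478389360), 1698146866, 662850400, (-1793183451), 1688882960, 0, 0]), ([6670, 17954, 21714, 9396, 17946, (-2188), 5332, (-538), 11948, (-848), 1032, 6352, (-33510), (-13498), (-58618), (-42116), (-44136), (-10090), 33150, 35146, 99858, 39342, 60022, 24064, 448, 6956, (-32524), (-35836), (-59764), (-36376), (-21336), 10684, 62282, 37682, 86562, 53992, 84866, 54916, 43636, (-15994), (-34124), (-30336), (-34096)], [(-12312), 0, 92, 0, 18533, 0, 1115, 0, 5333, 0, (-1748), 0, (-19476), 0, 544, 0, 6873, 0, (-837), 0, (-1813), 0, 770, 0, (-2292), 0, (-358), 0, 7352, 0, (-414), 0, 9832, 0, 922, 0, (-20637), 0, (-1905), 0, (-6479), 0, 1804, 0, 16996], [5642, 0, 2818, 0, (-5369), 0, (-4029), 0, (-6667), 0, 2236, 0, 13182, 0, 1502, 0, (-4035), 0, (-4047), 0, (-12685), 0, 1692, 0, 15286, 0, 1822, 0, (-6224), 0, (-2178), 0, (-6958), 0, 2556, 0, 12021, 0, (-2357), 0, (-6103), 0, 1880, 0]), ([6559237336, 24208835482, 35970718586, 19046524832, 15467050760, (-2193617758), 24698268466, 12312242024, 21534158590, 11926828692, 11349024322, (-5191513314), (-21662903400), (-18543610926), (-59717094810), (-47229242444), (-58868386754), (-26933508412), 51184004650, 64712692270, 111357595618, 75650140672, 81030424030, 18411651502, 37717021566, 27953015940, (-2704375770), (-30171260062), (-68469035904), (-63064888044), (-2784416704), 29227700380, 65588012136, 79007220222, 129358170950,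 67177420600, 119077438664, 94832735474, 84987647730, (-588980680), (-21084298672), (-31491767094), (-5288813638)], [(-14699500209), (-5013164760), (-514012840), 4945051984, 19965212933, 3043789560, (-2323166484), (-704452920), 8487014117, 956414656, 1276412496, (-2319067984), (-23905126400), (-3759294624), 3476834304, 541182816, 4633359063, 4369858464, (-3142337876), (-1901277088), 2478686660, (-2609459176), 903432808, 2385172920, (-5789286160), (-220468352), 1536770592, (-1650485464), 9080841849, 2766856912, (-4591277752), 1403996784, 14893928339, 729877288, 4534581872, (-3916946160), (-27529060703), 180610472, 2918407164, (-3535611848), (-6725861355), (-483218656), (-4463885600), 5119585920, 21552561174], [8140262873, 3644092360, 2599551792, (-4292445328), (-6314425171), 1688949512, (-3105394804), (-119719528), (-5116789001), (-6834752784), (-450200688), 7543675968, 11266084308, 3871898352, 4664387000, (-7598416304), (-4470772779), 5083373360, (-4094834604), (-2190520352), (-9914493842), (-9484313864), (-1144189808), 10628503672, 11643751082, 3094266432, 6241823968, (-8484462184), (-6811443653), 6978130608, (-3050446792), (-4024704752), (-1216996399), (-4589605272), (-845067208), 6620483920, 9353837553, 1519332152, 986537900, (-3783312376), (-5081941415), 0, 0, 1013329776]))"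

definition certificates :: "certificate list" where
  "certificates = [certificate_25, certificate_27, certificate_29, certificate_32, certificate_35,
     certificate_39, certificate_44]"

lemma certificates_valid: "\<forall>j<length certificates. valid_certificate (certificates ! j)"
proof -
  have "valid_certificate certificate_25" "valid_certificate certificate_27"
    "valid_certificate certificate_29" "valid_certificate certificate_32"
    "valid_certificate certificate_35" "valid_certificate certificate_39"
    "valid_certificate certificate_44"
    unfolding certificate_25_def certificate_27_def certificate_29_def certificate_32_def
      certificate_35_def certificate_39_def certificate_44_def stern_table_def twisted_stern_table_def
    by code_simp+
  then have "list_all valid_certificate certificates" by (simp add: certificates_def)
  then show ?thesis by (simp add: list_all_length)
qed

lemma certificate_degrees: "map fst certificates = [25, 27, 29, 32, 35, 39, 44]"
  by (simp add: certificates_def certificate_25_def certificate_27_def certificate_29_def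
      certificate_32_def certificate_35_def certificate_39_def certificate_44_def)

lemma certificate_degree_steps:
  "\<forall>j<length certificates. degree_step_ok (cert_degree certificates j) (next_degree certificates j)"
proof -
  have len: "length certificates = 7" using arg_cong[OF certificate_degrees, of length] by simp
  have "cert_degree certificates j = [25, 27, 29, 32, 35, 39, 44] ! j" if "j < 7" for j
    using that len nth_map[of j certificates fst] unfolding cert_degree_def certificate_degrees by simp
  then show ?thesis
    unfolding next_degree_def len
    by (simp add: numeral_eq_Suc All_less_Suc degree_step_ok_def Let_def)
qed

theorem theorem1:
  shows "(\<forall>b::int. b \<ge> 2 \<longrightarrow>
           sim_approx_exponent [stern_A (1 / real_of_int b), stern_B (1 / real_of_int b)]
             \<le> ereal (8/5))
       \<and> (\<forall>(a::int) (b::int) (lam::real). b \<ge> 2 \<and> a \<noteq> 0 \<and>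
           ln \<bar>real_of_int a\<bar> = lam * ln (real_of_int b) \<and> 0 \<le> lam \<and> lam < 50/77 \<longrightarrow>
           sim_approx_exponent [stern_A (real_of_int a / real_of_int b),
                                stern_B (real_of_int a / real_of_int b)]
             \<le> ereal (80 * (1 - lam) / (50 - 77 * lam)))"
proof -
  have general: "sim_approx_exponent [stern_A (real_of_int a / real_of_int b),
      stern_B (real_of_int a / real_of_int b)] \<le> ereal (80 * (1 - lam) / (50 - 77 * lam))"
    if b: "b \<ge> 2" and a: "a \<noteq> 0" and lam: "ln \<bar>real_of_int a\<bar> = lam * ln (real_of_int b)"
      "0 \<le> lam" "lam < 50/77"
    for a b :: int and lam :: real
  proof (rule sim_approx_exponent_le)
    show "80 * (1 - lam) / (50 - 77 * lam) \<ge> 0" using lam by simp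
    have "certificates \<noteq> []" by (simp add: certificates_def)
    then show "approx_denominators_bounded (stern_A (real_of_int a / real_of_int b))
        (stern_B (real_of_int a / real_of_int b)) \<mu>" if "\<mu> > 80 * (1 - lam) / (50 - 77 * lam)" for \<mu>
      by (rule stern_approx_denominators_bounded[OF certificates_valid _ certificate_degree_steps
            b a lam that])
  qed
  have "sim_approx_exponent [stern_A (1 / real_of_int b), stern_B (1 / real_of_int b)] \<le> ereal (8/5)"
    if "b \<ge> 2" for b :: int
    using general[of b 1 0] that by simp
  with general show ?thesis by blast
qed

end
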